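(* Let $N\geq 3$ and let $(M,g)$ be an $N$-dimensional Riemannian model with pole $o$ and metric $ds^2=dr^2+\psi^2(r)\,d\omega^2$, where $\psi$ is a $C^\infty$ nonnegative function on $[0,+\infty)$, positive on $(0,+\infty)$, with $\psi'(0)=1$ and $\psi^{(2k)}(0)=0$ for all $k\geq0$. Then for all $u\in C_c^\infty(M)$, $$\int_M(\Delta_{r,g}u)^2\,dv_g-\frac{N-1}{4}\int_M\Big[\Lambda_{\pi,r}^{rad}+4\big(K_{\pi,r}^{rad}-H_{\pi,r}^{tan}\big)\Big]\Big(\frac{\partial u}{\partial r}\Big)^2dv_g\geq\frac14\int_M\frac1{r^2}\Big(\frac{\partial u}{\partial r}\Big)^2dv_g+\frac{N^2-1}{4}\int_M\frac1{\psi^2}\Big(\frac{\partial u}{\partial r}\Big)^2dv_g.$$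
   Context: $d\omega^2$ is the standard metric on $\mathbb{S}^{N-1}$, $r$ the geodesic distance from $o$, $\frac{\partial u}{\partial r}$ the radial derivative in spherical coordinates, $dv_g$ the Riemannian volume. The radial part of the Laplace–Beltrami operator is $\Delta_{r,g}u=\frac{\partial^2u}{\partial r^2}+(N-1)\frac{\psi'}{\psi}\frac{\partial u}{\partial r}$. Curvatures: $K_{\pi,r}^{rad}=-\frac{\psi''}{\psi}$, $H_{\pi,r}^{tan}=-\frac{(\psi')^2-1}{\psi^2}$, and $\Lambda_{\pi,r}^{rad}=-2K_{\pi,r}^{rad}-(N-3)H_{\pi,r}^{tan}$. *)

theory Defs
  imports "HOL-Analysis.Analysis"
begin

fun iter_dderiv :: "'a::euclidean_space list \<Rightarrow> ('a \<Rightarrow> real) \<Rightarrow> 'a \<Rightarrow> real" where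
  "iter_dderiv [] f = f"
| "iter_dderiv (v # vs) f = (\<lambda>x. frechet_derivative (iter_dderiv vs f) (at x) v)"

definition smooth_fun :: "('a::euclidean_space \<Rightarrow> real) \<Rightarrow> bool" where
  "smooth_fun f \<longleftrightarrow> (\<forall>vs. iter_dderiv vs f differentiable_on UNIV)"

definition compact_support :: "('a::euclidean_space \<Rightarrow> real) \<Rightarrow> bool" where
  "compact_support f \<longleftrightarrow> compact (closure {x. f x \<noteq> 0})"

text \<open>Points of the model are written in normal (exponential) coordinates at the pole:
  x in R^N, r = norm x, direction sgn x in the unit sphere.\<close>
definition radial_deriv :: "('a::euclidean_space \<Rightarrow> real) \<Rightarrow> 'a \<Rightarrow> real" where
  "radial_deriv u x = deriv (\<lambda>t. u (t *\<^sub>R sgn x)) (norm x)"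

definition radial_deriv2 :: "('a::euclidean_space \<Rightarrow> real) \<Rightarrow> 'a \<Rightarrow> real" where
  "radial_deriv2 u x = deriv (deriv (\<lambda>t. u (t *\<^sub>R sgn x))) (norm x)"

text \<open>D k is the k-th derivative of psi on [0,\<infinity>); N the dimension.\<close>
definition radial_laplacian ::
  "nat \<Rightarrow> (nat \<Rightarrow> real \<Rightarrow> real) \<Rightarrow> ('a::euclidean_space \<Rightarrow> real) \<Rightarrow> 'a \<Rightarrow> real" where
  "radial_laplacian N D u x =
     radial_deriv2 u x + real (N - 1) * (D 1 (norm x) / D 0 (norm x)) * radial_deriv u x"

definition K_rad :: "(nat \<Rightarrow> real \<Rightarrow> real) \<Rightarrow> real \<Rightarrow> real" where
  "K_rad D r = - (D 2 r / D 0 r)"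

definition H_tan :: "(nat \<Rightarrow> real \<Rightarrow> real) \<Rightarrow> real \<Rightarrow> real" where
  "H_tan D r = - (((D 1 r)\<^sup>2 - 1) / (D 0 r)\<^sup>2)"

definition Lambda_rad :: "nat \<Rightarrow> (nat \<Rightarrow> real \<Rightarrow> real) \<Rightarrow> real \<Rightarrow> real" where
  "Lambda_rad N D r = - 2 * K_rad D r - (real N - 3) * H_tan D r"

text \<open>Riemannian volume density w.r.t. Lebesgue measure in normal coordinates:
  dv_g = (psi(r)/r)^(N-1) dx, since dv_g = psi(r)^(N-1) dr d\<omega> and dx = r^(N-1) dr d\<omega>.\<close>
definition vol_density :: "nat \<Rightarrow> (real \<Rightarrow> real) \<Rightarrow> 'a::euclidean_space \<Rightarrow> real" where
  "vol_density N psi x = (psi (norm x) / norm x) ^ (N - 1)"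

end

theory Submission
  imports Defs
begin

(* Along a ray from the pole, with v the radial derivative of u and r the distance, the difference of
   the two sides of the inequality has the density (times the Jacobian r^(N-1))
     psi^(N-1) (v' + (N-1)/2 psi'/psi v - v/(2r))^2
       + d/dr [v^2 ((N-1)/2 psi' psi^(N-2) + psi^(N-1)/(2r))].
   The square is nonnegative, and the bracket vanishes outside the support of u and is O(r) at the
   pole because psi(r) ~ r there; so every ray contributes a nonnegative amount, and integrating over
   all directions (polar coordinates) proves the inequality. Each term is separately integrable since
   it is O(1/|x|^2) near the pole and N >= 3. *)

section \<open>Polar coordinates\<close>

lemma integral_nonneg_iff_nn_integral_le:
  fixes f :: "'a \<Rightarrow> real"
  assumes "integrable M f"
  shows "0 \<le> integral\<^sup>L M f \<longleftrightarrow> (\<integral>\<^sup>+x. ennreal (- f x) \<partial>M) \<le> (\<integral>\<^sup>+x. ennreal (f x) \<partial>M)"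
proof -
  have "(\<integral>\<^sup>+x. ennreal (f x) \<partial>M) \<noteq> \<infinity>" "(\<integral>\<^sup>+x. ennreal (- f x) \<partial>M) \<noteq> \<infinity>"
    using integrableD(2,3)[OF assms] by auto
  then show ?thesis
    unfolding real_lebesgue_integral_def[OF assms]
    by (metis diff_ge_0_iff_ge enn2real_le enn2real_mono ennreal_enn2real_if infinity_ennreal_def
        order_le_imp_less_or_eq top_greatest)
qed

lemma nn_integral_ray_rescale:
  fixes f :: "'a::euclidean_space \<Rightarrow> ennreal"
  assumes [measurable]: "f \<in> borel_measurable borel" and x: "x \<noteq> 0" and n: "n \<ge> 1"
  shows "(\<integral>\<^sup>+\<rho>. indicator {0<..} \<rho> * f (\<rho> *\<^sub>R sgn x) * ennreal (\<rho> ^ (n - 1)) \<partial>lborel)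
       = (\<integral>\<^sup>+s. indicator {0<..} s * f (s *\<^sub>R x) * ennreal (s ^ (n - 1) * norm x ^ n) \<partial>lborel)"
proof -
  define c where "c = norm x"
  have c: "c > 0" using x by (simp add: c_def)
  have "(\<integral>\<^sup>+\<rho>. indicator {0<..} \<rho> * f (\<rho> *\<^sub>R sgn x) * ennreal (\<rho> ^ (n - 1)) \<partial>lborel)
      = ennreal \<bar>c\<bar> * (\<integral>\<^sup>+s. indicator {0<..} (0 + c * s) * f ((0 + c * s) *\<^sub>R sgn x) * ennreal ((0 + c * s) ^ (n - 1)) \<partial>lborel)"
    by (rule nn_integral_real_affine) (use c in auto)
  also have "\<dots> = (\<integral>\<^sup>+s. ennreal c * (indicator {0<..} (c * s) * f ((c * s) *\<^sub>R sgn x) * ennreal ((c * s) ^ (n - 1))) \<partial>lborel)"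
    using c by (subst nn_integral_cmult) auto
  also have "\<dots> = (\<integral>\<^sup>+s. indicator {0<..} s * f (s *\<^sub>R x) * ennreal (s ^ (n - 1) * norm x ^ n) \<partial>lborel)"
  proof (intro nn_integral_cong)
    fix s :: real
    have "(c * s) *\<^sub>R sgn x = s *\<^sub>R x" using x by (simp add: c_def sgn_div_norm)
    moreover have "s ^ (n - 1) * norm x ^ n = c * (c * s) ^ (n - 1)"
      using n by (cases n) (auto simp: c_def power_mult_distrib)
    ultimately show "ennreal c * (indicator {0<..} (c * s) * f ((c * s) *\<^sub>R sgn x) * ennreal ((c * s) ^ (n - 1)))
        = indicator {0<..} s * f (s *\<^sub>R x) * ennreal (s ^ (n - 1) * norm x ^ n)"
      using c by (cases "s > 0") (simp_all add: indicator_def zero_less_mult_iff ennreal_mult' ac_simps)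
  qed
  finally show ?thesis .
qed

lemma nn_integral_power_tail:
  fixes a :: real
  assumes a: "a > 0" and n: "n \<ge> 1"
  shows "(\<integral>\<^sup>+s. indicator {a..} s * ennreal (a ^ n / s ^ (n + 1)) \<partial>lborel) = ennreal (1 / real n)"
proof -
  have "((\<lambda>s. a ^ n * s powr (- real (n + 1))) has_integral a ^ n * (- (a powr (- real (n + 1) + 1)) / (- real (n + 1) + 1))) {a..}"
    by (intro has_integral_mult_right has_integral_powr_to_inf) (use a n in auto)
  moreover have "a ^ n * (- (a powr (- real (n + 1) + 1)) / (- real (n + 1) + 1)) = 1 / real n"
    using a n by (simp add: powr_minus powr_realpow[symmetric] field_simps)
  ultimately have "(\<integral>\<^sup>+s. ennreal (indicator {a..} s * (a ^ n * s powr (- real (n + 1)))) \<partial>lborel) = ennreal (1 / real n)"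
    using nn_integral_has_integral_lebesgue[of _ "\<lambda>s. a ^ n * s powr (- real (n + 1))"] a by simp
  also have "(\<integral>\<^sup>+s. ennreal (indicator {a..} s * (a ^ n * s powr (- real (n + 1)))) \<partial>lborel)
      = (\<integral>\<^sup>+s. indicator {a..} s * ennreal (a ^ n / s ^ (n + 1)) \<partial>lborel)"
  proof (intro nn_integral_cong)
    fix s :: real
    have "s powr (- real (n + 1)) = 1 / s ^ (n + 1)" if "s > 0"
      using that by (simp only: powr_minus powr_realpow inverse_eq_divide)
    then show "ennreal (indicator {a..} s * (a ^ n * s powr (- real (n + 1))))
        = indicator {a..} s * ennreal (a ^ n / s ^ (n + 1))"
      using a by (auto simp: indicator_def)
  qed
  finally show ?thesis .
qed

definition ray_integral :: "('a::euclidean_space \<Rightarrow> ennreal) \<Rightarrow> 'a \<Rightarrow> ennreal" where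
  "ray_integral f \<omega> =
     (\<integral>\<^sup>+\<rho>. indicator {0<..} \<rho> * f (\<rho> *\<^sub>R \<omega>) * ennreal (\<rho> ^ (DIM('a::euclidean_space) - 1)) \<partial>lborel)"

lemma nn_integral_cone_slice:
  fixes f :: "'a::euclidean_space \<Rightarrow> ennreal"
  assumes f[measurable]: "f \<in> borel_measurable borel" and s: "s > 0"
  shows "(\<integral>\<^sup>+x. (if norm x \<le> 1 then f (s *\<^sub>R x) * ennreal (s ^ (DIM('a) - 1) * norm x ^ DIM('a)) else 0) \<partial>lborel)
    = (\<integral>\<^sup>+y. (if norm y \<le> s then f y * ennreal (norm y ^ DIM('a) / s ^ (DIM('a) + 1)) else 0) \<partial>lborel)"
    (is "_ = (\<integral>\<^sup>+y. ?G y \<partial>lborel)")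
proof -
  have "(\<integral>\<^sup>+y. ?G y \<partial>lborel) = (\<integral>\<^sup>+x. ennreal (\<bar>s\<bar> ^ DIM('a)) * ?G (s *\<^sub>R x) \<partial>lborel)"
    using s by (subst lborel_affine[of s 0]) (simp_all add: nn_integral_density nn_integral_distr)
  also have "\<dots> = (\<integral>\<^sup>+x. (if norm x \<le> 1 then f (s *\<^sub>R x) * ennreal (s ^ (DIM('a) - 1) * norm x ^ DIM('a)) else 0) \<partial>lborel)"
  proof (rule nn_integral_cong)
    fix x :: 'a
    have "s ^ DIM('a) * ((s * norm x) ^ DIM('a) / s ^ (DIM('a) + 1)) = s ^ (DIM('a) - 1) * norm x ^ DIM('a)"
      using s by (cases "DIM('a)") (auto simp: field_simps)
    then show "ennreal (\<bar>s\<bar> ^ DIM('a)) * ?G (s *\<^sub>R x)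
        = (if norm x \<le> 1 then f (s *\<^sub>R x) * ennreal (s ^ (DIM('a) - 1) * norm x ^ DIM('a)) else 0)"
      using s by (simp add: ennreal_mult'[symmetric] ac_simps)
  qed
  finally show ?thesis ..
qed

lemma nn_integral_ball_rays:
  fixes f :: "'a::euclidean_space \<Rightarrow> ennreal"
  assumes f[measurable]: "f \<in> borel_measurable borel"
  shows "(\<integral>\<^sup>+x. indicator (cball 0 1) x * ray_integral f (sgn x) \<partial>lborel)
    = (\<integral>\<^sup>+y. f y \<partial>lborel) * ennreal (1 / real DIM('a))"
proof -
  define N where "N = DIM('a)"
  have N: "N \<ge> 1" by (simp add: N_def Suc_leI)
  define H where "H x s = (if norm x \<le> 1 \<and> 0 < s then f (s *\<^sub>R x) * ennreal (s ^ (N - 1) * norm x ^ N) else 0)"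
    for x :: 'a and s :: real
  define G where "G s y = (if 0 < s \<and> norm y \<le> s then f y * ennreal (norm y ^ N / s ^ (N + 1)) else 0)"
    for s :: real and y :: 'a
  have H: "(\<lambda>(x, s). H x s) \<in> borel_measurable (lborel \<Otimes>\<^sub>M lborel)"
    unfolding H_def by measurable
  have G: "(\<lambda>(s, y). G s y) \<in> borel_measurable (lborel \<Otimes>\<^sub>M lborel)"
    unfolding G_def by measurable
  have "(\<integral>\<^sup>+x. indicator (cball 0 1) x * ray_integral f (sgn x) \<partial>lborel) = (\<integral>\<^sup>+x. (\<integral>\<^sup>+s. H x s \<partial>lborel) \<partial>lborel)"
  proof (intro nn_integral_cong_AE eventually_mono[OF AE_lborel_singleton[of 0]])
    fix x :: 'a assume "x \<noteq> 0"
    show "indicator (cball 0 1) x * ray_integral f (sgn x) = (\<integral>\<^sup>+s. H x s \<partial>lborel)"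
    proof (cases "norm x \<le> 1")
      case True
      then show ?thesis
        unfolding ray_integral_def nn_integral_ray_rescale[OF f \<open>x \<noteq> 0\<close> N[unfolded N_def]]
        by (subst nn_integral_cmult[symmetric]) (auto simp: H_def N_def indicator_def intro!: nn_integral_cong)
    qed (simp add: H_def)
  qed
  also have "\<dots> = (\<integral>\<^sup>+s. (\<integral>\<^sup>+x. H x s \<partial>lborel) \<partial>lborel)"
    using lborel_pair.Fubini'[OF H] by simp
  also have "\<dots> = (\<integral>\<^sup>+s. (\<integral>\<^sup>+y. G s y \<partial>lborel) \<partial>lborel)"
  proof (rule nn_integral_cong)
    fix s :: real
    show "(\<integral>\<^sup>+x. H x s \<partial>lborel) = (\<integral>\<^sup>+y. G s y \<partial>lborel)"
    proof (cases "s > 0")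
      case True
      then show ?thesis
        using nn_integral_cone_slice[OF f True, folded N_def] by (simp add: H_def G_def)
    qed (simp add: H_def G_def)
  qed
  also have "\<dots> = (\<integral>\<^sup>+y. (\<integral>\<^sup>+s. G s y \<partial>lborel) \<partial>lborel)"
    using lborel_pair.Fubini'[OF G] by simp
  also have "\<dots> = (\<integral>\<^sup>+y. f y * ennreal (1 / real N) \<partial>lborel)"
  proof (intro nn_integral_cong_AE eventually_mono[OF AE_lborel_singleton[of 0]])
    fix y :: 'a assume "y \<noteq> 0"
    have "(\<integral>\<^sup>+s. G s y \<partial>lborel) = f y * (\<integral>\<^sup>+s. indicator {norm y..} s * ennreal (norm y ^ N / s ^ (N + 1)) \<partial>lborel)"
      using \<open>y \<noteq> 0\<close> order.strict_trans2[OF zero_less_norm_iff[THEN iffD2, OF \<open>y \<noteq> 0\<close>]]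
      by (subst nn_integral_cmult[symmetric]) (auto simp: G_def indicator_def intro!: nn_integral_cong)
    then show "(\<integral>\<^sup>+s. G s y \<partial>lborel) = f y * ennreal (1 / real N)"
      using nn_integral_power_tail[of "norm y" N] \<open>y \<noteq> 0\<close> N by simp
  qed
  also have "\<dots> = (\<integral>\<^sup>+y. f y \<partial>lborel) * ennreal (1 / real N)"
    by (rule nn_integral_multc) simp
  finally show ?thesis
    unfolding N_def .
qed

text \<open>Polar coordinates without a surface measure on the sphere: since the integral of
  \<open>r ^ (N - 1)\<close> over \<open>[0, 1]\<close> is \<open>1 / N\<close>, integrating the ray integral in direction \<open>x / |x|\<close>
  over the unit ball gives \<open>1 / N\<close> times its integral over the sphere.\<close>
lemma nn_integral_polar:
  fixes f :: "'a::euclidean_space \<Rightarrow> ennreal"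
  assumes "f \<in> borel_measurable borel"
  shows "(\<integral>\<^sup>+x. f x \<partial>lborel) = of_nat DIM('a) * (\<integral>\<^sup>+x. indicator (cball 0 1) x * ray_integral f (sgn x) \<partial>lborel)"
proof -
  have "of_nat DIM('a) * ennreal (1 / real DIM('a)) = 1"
    by (simp add: ennreal_of_nat_eq_real_of_nat ennreal_mult'[symmetric])
  then show ?thesis
    unfolding nn_integral_ball_rays[OF assms] by (metis mult.left_commute mult_1_right)
qed

lemma nn_integral_mono_polar:
  fixes f g :: "'a::euclidean_space \<Rightarrow> ennreal"
  assumes [measurable]: "f \<in> borel_measurable borel" "g \<in> borel_measurable borel"
    and ray_le: "\<And>\<omega>. norm \<omega> = 1 \<Longrightarrow> ray_integral f \<omega> \<le> ray_integral g \<omega>"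
  shows "(\<integral>\<^sup>+x. f x \<partial>lborel) \<le> (\<integral>\<^sup>+x. g x \<partial>lborel)"
proof -
  have "(\<integral>\<^sup>+x. indicator (cball 0 1) x * ray_integral f (sgn x) \<partial>lborel)
      \<le> (\<integral>\<^sup>+x. indicator (cball 0 1) x * ray_integral g (sgn x) \<partial>lborel)"
    by (intro nn_integral_mono_AE eventually_mono[OF AE_lborel_singleton[of 0]] mult_left_mono
        ray_le zero_le) (simp add: norm_sgn)
  then show ?thesis
    by (simp add: nn_integral_polar[of f] nn_integral_polar[of g] mult_left_mono)
qed

lemma integrable_inverse_square_bounded:
  fixes g :: "'a::euclidean_space \<Rightarrow> real"
  assumes dim: "DIM('a) \<ge> 3" and g[measurable]: "g \<in> borel_measurable borel"
    and R: "R > 0" and K: "K \<ge> 0" and vanish: "\<And>x. norm x > R \<Longrightarrow> g x = 0"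
    and bound: "\<And>x. norm x \<le> R \<Longrightarrow> \<bar>g x\<bar> \<le> K / (norm x)\<^sup>2"
  shows "integrable lborel g"
proof (rule integrableI_bounded)
  define h where "h x = ennreal (if norm x \<le> R then K / (norm x)\<^sup>2 else 0)" for x :: 'a
  have [measurable]: "h \<in> borel_measurable borel" unfolding h_def by measurable
  define c where "c = K * R ^ (DIM('a) - 3)"
  have c: "c \<ge> 0" using K R by (simp add: c_def)
  have ray_h: "ray_integral h \<omega> \<le> ennreal (c * R)" if \<omega>: "norm \<omega> = 1" for \<omega> :: 'a
  proof -
    have "ray_integral h \<omega> \<le> (\<integral>\<^sup>+\<rho>. ennreal c * indicator {0..R} \<rho> \<partial>lborel)"
      unfolding ray_integral_def
    proof (rule nn_integral_mono)
      fix \<rho> :: real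
      show "indicator {0<..} \<rho> * h (\<rho> *\<^sub>R \<omega>) * ennreal (\<rho> ^ (DIM('a) - 1)) \<le> ennreal c * indicator {0..R} \<rho>"
      proof (cases "0 < \<rho> \<and> \<rho> \<le> R")
        case True
        obtain m where m: "DIM('a) = m + 3" using dim by (metis le_add_diff_inverse2)
        have "K / \<rho>\<^sup>2 * \<rho> ^ (DIM('a) - 1) = K * \<rho> ^ (DIM('a) - 3)"
          using True by (simp add: m power_add power2_eq_square field_simps)
        also have "\<dots> \<le> c" unfolding c_def using True K by (intro mult_left_mono power_mono) auto
        finally show ?thesis
          using True \<omega> K by (simp add: h_def ennreal_mult'[symmetric] ennreal_leI)
      qed (use \<omega> in \<open>auto simp: h_def indicator_def\<close>)
    qed
    also have "\<dots> = ennreal (c * R)"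
      using R c by (simp add: nn_integral_cmult_indicator ennreal_mult')
    finally show ?thesis .
  qed
  have "(\<integral>\<^sup>+x. ennreal (norm (g x)) \<partial>lborel) \<le> (\<integral>\<^sup>+x. h x \<partial>lborel)"
    using bound vanish by (intro nn_integral_mono) (auto simp: h_def not_le intro: ennreal_leI)
  also have "\<dots> = of_nat DIM('a) * (\<integral>\<^sup>+x. indicator (cball 0 1) x * ray_integral h (sgn x) \<partial>lborel)"
    by (rule nn_integral_polar) simp
  also have "\<dots> \<le> of_nat DIM('a) * (\<integral>\<^sup>+x. ennreal (c * R) * indicator (cball (0::'a) 1) x \<partial>lborel)"
  proof (intro mult_left_mono nn_integral_mono_AE eventually_mono[OF AE_lborel_singleton[of 0]])
    fix x :: 'a assume "x \<noteq> 0"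
    then show "indicator (cball 0 1) x * ray_integral h (sgn x) \<le> ennreal (c * R) * indicator (cball 0 1) x"
      using ray_h[of "sgn x"] by (simp add: norm_sgn indicator_def)
  qed simp
  also have "\<dots> < \<infinity>"
    using emeasure_bounded_finite[of "cball (0::'a) 1"]
    by (simp add: nn_integral_cmult_indicator ennreal_mult_less_top of_nat_less_top)
  finally show "(\<integral>\<^sup>+x. ennreal (norm (g x)) \<partial>lborel) < \<infinity>" .
qed simp

lemma integral_ge_by_antiderivative:
  fixes J B B' :: "real \<Rightarrow> real"
  assumes J: "J integrable_on {0..R}" and \<epsilon>: "0 < \<epsilon>" "\<epsilon> \<le> R"
    and J_bound: "\<And>\<rho>. \<rho> \<in> {0..\<epsilon>} \<Longrightarrow> \<bar>J \<rho>\<bar> \<le> K"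
    and B_deriv: "\<And>\<rho>. \<rho> \<in> {\<epsilon>..R} \<Longrightarrow> (B has_real_derivative B' \<rho>) (at \<rho>)"
    and B'_le: "\<And>\<rho>. \<rho> \<in> {\<epsilon>..R} \<Longrightarrow> B' \<rho> \<le> J \<rho>"
  shows "B R - B \<epsilon> - K * \<epsilon> \<le> integral {0..R} J"
proof -
  have J0: "J integrable_on {0..\<epsilon>}" and J1: "J integrable_on {\<epsilon>..R}"
    using integrable_on_subinterval[OF J] \<epsilon> by auto
  have B'_int: "(B' has_integral (B R - B \<epsilon>)) {\<epsilon>..R}"
    using B_deriv \<epsilon>
    by (intro fundamental_theorem_of_calculus)
      (auto simp: has_real_derivative_iff_has_vector_derivative has_vector_derivative_at_within)
  have "0 \<le> integral {\<epsilon>..R} (\<lambda>\<rho>. J \<rho> - B' \<rho>)"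
    using J1 B'_int B'_le by (intro integral_nonneg integrable_diff) auto
  also have "\<dots> = integral {\<epsilon>..R} J - (B R - B \<epsilon>)"
    using J1 B'_int by (subst integral_diff) (auto simp: integral_unique)
  finally have far: "B R - B \<epsilon> \<le> integral {\<epsilon>..R} J"
    by simp
  have "norm (integral {0..\<epsilon>} J) \<le> integral {0..\<epsilon>} (\<lambda>_. K)"
    using J0 J_bound by (intro integral_norm_bound_integral) auto
  then have near: "- K * \<epsilon> \<le> integral {0..\<epsilon>} J"
    using \<epsilon> by (simp add: abs_le_iff mult.commute)
  have "integral {0..\<epsilon>} J + integral {\<epsilon>..R} J = integral {0..R} J"
    using Henstock_Kurzweil_Integration.integral_combine[of 0 \<epsilon> R J] \<epsilon> J by auto
  then show ?thesis
    using near far by simp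
qed

lemma integral_Ioi_nonneg_by_antiderivative:
  fixes I B B' :: "real \<Rightarrow> real"
  assumes [measurable]: "I \<in> borel_measurable borel"
    and R: "R > 0" and K: "K \<ge> 0"
    and I_vanish: "\<And>\<rho>. \<rho> \<ge> R \<Longrightarrow> I \<rho> = 0"
    and I_bound: "\<And>\<rho>. 0 < \<rho> \<Longrightarrow> \<rho> \<le> R \<Longrightarrow> \<bar>I \<rho>\<bar> \<le> K"
    and B_small: "\<And>\<epsilon>. 0 < \<epsilon> \<Longrightarrow> \<epsilon> \<le> 1 \<Longrightarrow> \<epsilon> \<le> R \<Longrightarrow> B \<epsilon> \<le> K * \<epsilon>"
    and B_R: "B R = 0"
    and B_deriv: "\<And>\<rho>. 0 < \<rho> \<Longrightarrow> (B has_real_derivative B' \<rho>) (at \<rho>)"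
    and B'_le: "\<And>\<rho>. 0 < \<rho> \<Longrightarrow> B' \<rho> \<le> I \<rho>"
  shows "integrable lborel (\<lambda>\<rho>. indicator {0<..} \<rho> * I \<rho>)"
    and "0 \<le> (\<integral>\<rho>. indicator {0<..} \<rho> * I \<rho> \<partial>lborel)"
proof -
  define J where "J = (\<lambda>\<rho>::real. indicator {0<..} \<rho> * I \<rho>)"
  have [measurable]: "J \<in> borel_measurable borel" unfolding J_def by measurable
  have J_bound: "norm (J \<rho>) \<le> norm (K * indicator {0..R} \<rho> :: real)" for \<rho>
    using I_bound[of \<rho>] I_vanish[of \<rho>] K by (cases "\<rho> > 0"; cases "\<rho> \<le> R") (auto simp: J_def)
  have J: "integrable lborel J"
  proof (rule Bochner_Integration.integrable_bound)
    show "integrable lborel (\<lambda>\<rho>. K * indicator {0..R} \<rho> :: real)"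
      using R by (intro integrable_mult_right integrable_real_indicator) (auto simp: emeasure_lborel_Icc_eq)
  qed (use J_bound in simp_all)
  then show "integrable lborel (\<lambda>\<rho>. indicator {0<..} \<rho> * I \<rho>)"
    by (simp add: J_def)
  have "(\<lambda>\<rho>. if \<rho> \<in> {0..R} then J \<rho> else 0) = J"
    using I_vanish by (auto simp: J_def indicator_def fun_eq_iff)
  then have "(J has_integral integral\<^sup>L lborel J) {0..R}"
    using has_integral_integral_lborel[OF J] has_integral_restrict_UNIV[of "{0..R}" J] by simp
  then have J_int: "J integrable_on {0..R}" and J_eq: "integral {0..R} J = integral\<^sup>L lborel J"
    by blast+
  have "0 \<le> integral\<^sup>L lborel J"
  proof (rule field_le_epsilon)
    fix e :: real assume e: "0 < e"
    define \<epsilon> where "\<epsilon> = min (min 1 R) (e / (2 * K + 1))"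
    have \<epsilon>: "0 < \<epsilon>" "\<epsilon> \<le> 1" "\<epsilon> \<le> R" "\<epsilon> \<le> e / (2 * K + 1)"
      using e R K by (auto simp: \<epsilon>_def)
    have "B R - B \<epsilon> - K * \<epsilon> \<le> integral {0..R} J"
    proof (rule integral_ge_by_antiderivative[OF J_int \<epsilon>(1,3)])
      fix \<rho> assume "\<rho> \<in> {0..\<epsilon>}"
      then show "\<bar>J \<rho>\<bar> \<le> K"
        using J_bound[of \<rho>] K \<epsilon> by (simp add: indicator_def)
    next
      fix \<rho> assume "\<rho> \<in> {\<epsilon>..R}"
      then show "(B has_real_derivative B' \<rho>) (at \<rho>)" "B' \<rho> \<le> J \<rho>"
        using B_deriv B'_le \<epsilon> by (simp_all add: J_def)
    qed
    then have "- (2 * K) * \<epsilon> \<le> integral\<^sup>L lborel J"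
      using B_R B_small[OF \<epsilon>(1-3)] J_eq by simp
    moreover have "2 * K * \<epsilon> \<le> 2 * K * (e / (2 * K + 1))"
      using \<epsilon> K by (intro mult_left_mono) auto
    moreover have "2 * K * (e / (2 * K + 1)) \<le> e"
      using K e by (simp add: field_simps)
    ultimately show "0 \<le> integral\<^sup>L lborel J + e"
      by simp
  qed
  then show "0 \<le> (\<integral>\<rho>. indicator {0<..} \<rho> * I \<rho> \<partial>lborel)"
    by (simp add: J_def)
qed

section \<open>Smooth functions and their radial derivatives\<close>

lemma smooth_fun_differentiable: "smooth_fun u \<Longrightarrow> iter_dderiv vs u differentiable (at x)"
  unfolding smooth_fun_def by (simp add: differentiable_on_eq_differentiable_at)

lemma smooth_fun_continuous_on: "smooth_fun u \<Longrightarrow> continuous_on S (iter_dderiv vs u)"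
  unfolding smooth_fun_def
  by (metis continuous_on_subset differentiable_imp_continuous_on subset_UNIV)

lemma smooth_fun_borel_measurable: "smooth_fun u \<Longrightarrow> iter_dderiv vs u \<in> borel_measurable borel"
  by (rule borel_measurable_continuous_onI[OF smooth_fun_continuous_on])

lemma has_real_derivative_along_ray:
  fixes h :: "'a::euclidean_space \<Rightarrow> real"
  assumes "h differentiable (at (t *\<^sub>R w))"
  shows "((\<lambda>t. h (t *\<^sub>R w)) has_real_derivative frechet_derivative h (at (t *\<^sub>R w)) w) (at t)"
proof -
  have h: "(h has_derivative frechet_derivative h (at (t *\<^sub>R w))) (at (t *\<^sub>R w))"
    using assms frechet_derivative_works by blast
  have "((\<lambda>t. t *\<^sub>R w) has_derivative (\<lambda>s. s *\<^sub>R w)) (at t)"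
    by (auto intro!: derivative_eq_intros)
  from diff_chain_at[OF this h]
  have "((\<lambda>t. h (t *\<^sub>R w)) has_derivative (\<lambda>s. frechet_derivative h (at (t *\<^sub>R w)) (s *\<^sub>R w))) (at t)"
    by (simp add: o_def)
  moreover have "(\<lambda>s. frechet_derivative h (at (t *\<^sub>R w)) (s *\<^sub>R w)) = (*) (frechet_derivative h (at (t *\<^sub>R w)) w)"
    using linear_scale[OF has_derivative_linear[OF h]] by (auto simp: mult.commute)
  ultimately show ?thesis
    unfolding has_field_derivative_def by simp
qed

lemma smooth_fun_has_derivative_along_ray:
  assumes "smooth_fun u"
  shows "((\<lambda>t. iter_dderiv vs u (t *\<^sub>R w)) has_real_derivative iter_dderiv (w # vs) u (t *\<^sub>R w)) (at t)"
  using has_real_derivative_along_ray[OF smooth_fun_differentiable[OF assms]] by simp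

lemma smooth_fun_deriv_along_ray:
  assumes "smooth_fun u"
  shows "deriv (\<lambda>t. iter_dderiv vs u (t *\<^sub>R w)) = (\<lambda>t. iter_dderiv (w # vs) u (t *\<^sub>R w))"
  using smooth_fun_has_derivative_along_ray[OF assms] DERIV_imp_deriv by blast

lemma smooth_fun_deriv2_along_ray:
  assumes "smooth_fun u"
  shows "deriv (deriv (\<lambda>t. u (t *\<^sub>R w))) = (\<lambda>t. iter_dderiv [w, w] u (t *\<^sub>R w))"
  using smooth_fun_deriv_along_ray[OF assms, of "[]" w] smooth_fun_deriv_along_ray[OF assms, of "[w]" w]
  by simp

lemma scaleR_norm_sgn: "norm x *\<^sub>R sgn x = (x::'a::real_normed_vector)"
  by (cases "x = 0") (simp_all add: sgn_div_norm)

lemma radial_deriv_eq_iter_dderiv: "smooth_fun u \<Longrightarrow> radial_deriv u x = iter_dderiv [sgn x] u x"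
  unfolding radial_deriv_def using smooth_fun_deriv_along_ray[of u "[]" "sgn x"]
  by (simp only: iter_dderiv.simps(1) scaleR_norm_sgn)

lemma radial_deriv2_eq_iter_dderiv: "smooth_fun u \<Longrightarrow> radial_deriv2 u x = iter_dderiv [sgn x, sgn x] u x"
  unfolding radial_deriv2_def using smooth_fun_deriv2_along_ray[of u "sgn x"]
  by (simp only: scaleR_norm_sgn)

lemma frechet_derivative_componentwise:
  fixes h :: "'a::euclidean_space \<Rightarrow> real"
  assumes "h differentiable (at x)"
  shows "frechet_derivative h (at x) e = (\<Sum>i\<in>Basis. (e \<bullet> i) * frechet_derivative h (at x) i)"
  using Linear_Algebra.linear_componentwise[OF has_derivative_linear[OF frechet_derivative_works[THEN iffD1, OF assms]], of e 1]
  by simp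

lemma iter_dderiv_componentwise:
  assumes "smooth_fun u"
  shows "iter_dderiv (e # vs) u x = (\<Sum>i\<in>Basis. (e \<bullet> i) * iter_dderiv (i # vs) u x)"
  unfolding iter_dderiv.simps(2)
  by (rule frechet_derivative_componentwise[OF smooth_fun_differentiable[OF assms]])

lemma iter_dderiv2_componentwise:
  assumes u: "smooth_fun u"
  shows "iter_dderiv [e, e] u x = (\<Sum>j\<in>Basis. (e \<bullet> j) * (\<Sum>i\<in>Basis. (e \<bullet> i) * iter_dderiv [i, j] u x))"
proof -
  have "iter_dderiv [e] u = (\<lambda>y. \<Sum>j\<in>Basis. (e \<bullet> j) * iter_dderiv [j] u y)"
    by (intro ext iter_dderiv_componentwise[OF u])
  moreover have "((\<lambda>y. \<Sum>j\<in>Basis. (e \<bullet> j) * iter_dderiv [j] u y) has_derivative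
          (\<lambda>h. \<Sum>j\<in>Basis. (e \<bullet> j) * frechet_derivative (iter_dderiv [j] u) (at x) h)) (at x)"
    using smooth_fun_differentiable[OF u] frechet_derivative_works
    by (intro has_derivative_sum has_derivative_mult_right) blast
  ultimately have fd: "frechet_derivative (iter_dderiv [e] u) (at x) =
      (\<lambda>h. \<Sum>j\<in>Basis. (e \<bullet> j) * frechet_derivative (iter_dderiv [j] u) (at x) h)"
    by (simp only: frechet_derivative_at[symmetric])
  have "iter_dderiv [e, e] u x = frechet_derivative (iter_dderiv [e] u) (at x) e"
    by simp
  also have "\<dots> = (\<Sum>j\<in>Basis. (e \<bullet> j) * frechet_derivative (iter_dderiv [j] u) (at x) e)"
    by (simp only: fd)
  also have "\<dots> = (\<Sum>j\<in>Basis. (e \<bullet> j) * iter_dderiv [e, j] u x)"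
    by simp
  also have "\<dots> = (\<Sum>j\<in>Basis. (e \<bullet> j) * (\<Sum>i\<in>Basis. (e \<bullet> i) * iter_dderiv [i, j] u x))"
    by (rule sum.cong[OF refl]) (simp only: iter_dderiv_componentwise[OF u, of e])
  finally show ?thesis .
qed

lemma borel_measurable_radial_deriv:
  assumes u: "smooth_fun u"
  shows "radial_deriv u \<in> borel_measurable borel"
proof -
  have [measurable]: "iter_dderiv vs u \<in> borel_measurable borel" for vs
    using smooth_fun_borel_measurable[OF u] .
  have "radial_deriv u = (\<lambda>x. \<Sum>i\<in>Basis. (sgn x \<bullet> i) * iter_dderiv [i] u x)"
    by (rule ext, rule trans[OF radial_deriv_eq_iter_dderiv[OF u] iter_dderiv_componentwise[OF u]])
  moreover have "(\<lambda>x. \<Sum>i\<in>Basis. (sgn x \<bullet> i) * iter_dderiv [i] u x) \<in> borel_measurable borel"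
    unfolding sgn_div_norm by measurable
  ultimately show ?thesis
    by (simp only:)
qed

lemma borel_measurable_radial_deriv2:
  assumes u: "smooth_fun u"
  shows "radial_deriv2 u \<in> borel_measurable borel"
proof -
  have [measurable]: "iter_dderiv vs u \<in> borel_measurable borel" for vs
    using smooth_fun_borel_measurable[OF u] .
  have "radial_deriv2 u = (\<lambda>x. \<Sum>j\<in>Basis. (sgn x \<bullet> j) * (\<Sum>i\<in>Basis. (sgn x \<bullet> i) * iter_dderiv [i, j] u x))"
    by (rule ext, rule trans[OF radial_deriv2_eq_iter_dderiv[OF u] iter_dderiv2_componentwise[OF u]])
  moreover have "(\<lambda>x. \<Sum>j\<in>Basis. (sgn x \<bullet> j) * (\<Sum>i\<in>Basis. (sgn x \<bullet> i) * iter_dderiv [i, j] u x))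
      \<in> borel_measurable borel"
    unfolding sgn_div_norm by measurable
  ultimately show ?thesis
    by (simp only:)
qed

lemma abs_sum_Basis_inner_le:
  fixes e :: "'a::euclidean_space"
  assumes "norm e \<le> 1"
  shows "\<bar>\<Sum>i\<in>Basis. (e \<bullet> i) * a i\<bar> \<le> (\<Sum>i\<in>Basis. \<bar>a i\<bar>)"
proof -
  have "\<bar>\<Sum>i\<in>Basis. (e \<bullet> i) * a i\<bar> \<le> (\<Sum>i\<in>Basis. \<bar>(e \<bullet> i) * a i\<bar>)"
    by (rule sum_abs)
  also have "\<dots> \<le> (\<Sum>i\<in>Basis. \<bar>a i\<bar>)"
  proof (rule sum_mono)
    fix i :: 'a assume "i \<in> Basis"
    then have "\<bar>e \<bullet> i\<bar> \<le> 1"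
      using Basis_le_norm[of i e] assms by simp
    then show "\<bar>(e \<bullet> i) * a i\<bar> \<le> \<bar>a i\<bar>"
      using mult_right_mono[of "\<bar>e \<bullet> i\<bar>" 1 "\<bar>a i\<bar>"] by (simp add: abs_mult)
  qed
  finally show ?thesis .
qed

lemma abs_radial_deriv_le:
  assumes u: "smooth_fun u"
  shows "\<bar>radial_deriv u x\<bar> \<le> (\<Sum>i\<in>Basis. \<bar>iter_dderiv [i] u x\<bar>)"
  unfolding radial_deriv_eq_iter_dderiv[OF u] iter_dderiv_componentwise[OF u, of "sgn x" "[]"]
  by (rule abs_sum_Basis_inner_le) (simp add: norm_sgn)

lemma abs_radial_deriv2_le:
  assumes u: "smooth_fun u"
  shows "\<bar>radial_deriv2 u x\<bar> \<le> (\<Sum>j\<in>Basis. \<Sum>i\<in>Basis. \<bar>iter_dderiv [i, j] u x\<bar>)"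
proof -
  have sgn: "norm (sgn x) \<le> 1"
    by (simp add: norm_sgn)
  have "\<bar>radial_deriv2 u x\<bar> \<le> (\<Sum>j\<in>Basis. \<bar>\<Sum>i\<in>Basis. (sgn x \<bullet> i) * iter_dderiv [i, j] u x\<bar>)"
    unfolding radial_deriv2_eq_iter_dderiv[OF u] iter_dderiv2_componentwise[OF u, of "sgn x"]
    by (rule abs_sum_Basis_inner_le[OF sgn])
  also have "\<dots> \<le> (\<Sum>j\<in>Basis. \<Sum>i\<in>Basis. \<bar>iter_dderiv [i, j] u x\<bar>)"
    by (intro sum_mono abs_sum_Basis_inner_le[OF sgn])
  finally show ?thesis .
qed

lemma radial_derivs_bounded:
  fixes u :: "'a::euclidean_space \<Rightarrow> real"
  assumes u: "smooth_fun u"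
  obtains M where "M \<ge> 0" "\<And>x. norm x \<le> R \<Longrightarrow> \<bar>radial_deriv u x\<bar> \<le> M"
     "\<And>x. norm x \<le> R \<Longrightarrow> \<bar>radial_deriv2 u x\<bar> \<le> M"
proof -
  define S where "S x = (\<Sum>i\<in>Basis. \<bar>iter_dderiv [i] u x\<bar>) + (\<Sum>j\<in>Basis. \<Sum>i\<in>Basis. \<bar>iter_dderiv [i, j] u x\<bar>)"
    for x
  have "continuous_on (cball 0 R) S"
    unfolding S_def by (intro continuous_intros smooth_fun_continuous_on[OF u])
  then have "compact (S ` cball 0 R)"
    by (rule compact_continuous_image) simp
  then obtain M where M: "\<forall>y \<in> S ` cball 0 R. norm y \<le> M"
    using compact_imp_bounded[of "S ` cball 0 R"] unfolding bounded_iff by blast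
  have S: "\<bar>radial_deriv u x\<bar> \<le> S x" "\<bar>radial_deriv2 u x\<bar> \<le> S x" for x
    using abs_radial_deriv_le[OF u, of x] abs_radial_deriv2_le[OF u, of x] sum_nonneg[of Basis "\<lambda>i. \<bar>iter_dderiv [i] u x\<bar>"]
      sum_nonneg[of Basis "\<lambda>j. \<Sum>i\<in>Basis. \<bar>iter_dderiv [i, j] u x\<bar>"]
    by (auto simp: S_def sum_nonneg)
  show ?thesis
  proof (rule that[of "max M 0"])
    fix x :: 'a assume "norm x \<le> R"
    then have "\<bar>S x\<bar> \<le> M"
      using M by auto
    then show "\<bar>radial_deriv u x\<bar> \<le> max M 0" "\<bar>radial_deriv2 u x\<bar> \<le> max M 0"
      using S[of x] by linarith+
  qed simp
qed

lemma radial_derivs_vanish: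
  assumes vanish: "\<And>x. R \<le> norm x \<Longrightarrow> u x = 0" and R: "0 \<le> R" and x: "R < norm x"
  shows "radial_deriv u x = 0" "radial_deriv2 u x = 0"
proof -
  let ?v = "\<lambda>t. u (t *\<^sub>R sgn x)"
  have "x \<noteq> 0" using x R by auto
  have v: "?v t = 0" if "R < t" for t
  proof (rule vanish)
    show "R \<le> norm (t *\<^sub>R sgn x)"
      using that R \<open>x \<noteq> 0\<close> by (simp add: norm_sgn)
  qed
  have "(?v has_real_derivative 0) (at t)" if "R < t" for t
    by (rule has_field_derivative_transform_within_open[of "\<lambda>_. 0" 0 t "{R<..}"]) (use that v in auto)
  then have v': "deriv ?v t = 0" if "R < t" for t
    using that DERIV_imp_deriv by blast
  have "(deriv ?v has_real_derivative 0) (at (norm x))"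
    by (rule has_field_derivative_transform_within_open[of "\<lambda>_. 0" 0 "norm x" "{R<..}"]) (use x v' in auto)
  then show "radial_deriv u x = 0" "radial_deriv2 u x = 0"
    unfolding radial_deriv_def radial_deriv2_def using v' x DERIV_imp_deriv by auto
qed

lemma compact_support_vanishes_outside_ball:
  assumes "compact_support u"
  obtains R where "R > 0" "\<And>x. R \<le> norm x \<Longrightarrow> u x = 0"
proof -
  have "bounded {x. u x \<noteq> 0}"
    using assms compact_imp_bounded bounded_subset closure_subset unfolding compact_support_def by blast
  then obtain a where "\<And>x. u x \<noteq> 0 \<Longrightarrow> norm x \<le> a"
    unfolding bounded_iff by blast
  then show ?thesis
    by (intro that[of "\<bar>a\<bar> + 1"]) force+
qed

section \<open>The profile of the model\<close>

locale derivative_tower =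
  fixes D :: "nat \<Rightarrow> real \<Rightarrow> real"
  assumes has_derivative_tower: "\<forall>k. \<forall>x\<ge>0. (D k has_real_derivative D (Suc k) x) (at x within {0..})"
begin

lemma continuous_on_D: "continuous_on {0..} (D k)"
  unfolding continuous_on_eq_continuous_within
  using has_derivative_tower by (auto intro: DERIV_continuous)

lemma has_real_derivative_D_at:
  assumes "r > 0"
  shows "(D k has_real_derivative D (Suc k) r) (at r)"
proof -
  have "(D k has_real_derivative D (Suc k) r) (at r within {0..})"
    using has_derivative_tower assms by simp
  moreover have "at r within {0..} = at r"
    by (rule at_within_interior) (use assms in auto)
  ultimately show ?thesis by simp
qed

lemma mean_value_D:
  assumes "0 \<le> a" "a \<le> b"
  obtains \<xi> where "\<xi> \<in> {a..b}" "D k b - D k a = D (Suc k) \<xi> * (b - a)"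
proof -
  have "(D k has_derivative (\<lambda>h. D (Suc k) x * h)) (at x within {a..b})" if "x \<in> {a..b}" for x
    using has_derivative_tower assms that DERIV_subset[of "D k" _ x "{0..}" "{a..b}"]
    by (auto simp: has_field_derivative_def)
  then have "\<exists>\<xi>\<in>{a..b}. D k b - D k a = (\<lambda>h. D (Suc k) \<xi> * h) (b - a)"
    by (intro mvt_very_simple[OF \<open>a \<le> b\<close>]) auto
  then show ?thesis
    using that by auto
qed

lemma bounded_D:
  obtains B where "B \<ge> 0" "\<And>r. 0 \<le> r \<Longrightarrow> r \<le> R \<Longrightarrow> \<bar>D k r\<bar> \<le> B"
proof -
  have "compact (D k ` {0..R})"
    by (intro compact_continuous_image continuous_on_subset[OF continuous_on_D]) auto
  then obtain B where "\<forall>y \<in> D k ` {0..R}. norm y \<le> B"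
    using compact_imp_bounded[of "D k ` {0..R}"] unfolding bounded_iff by blast
  then show ?thesis
    by (intro that[of "max B 0"]) force+
qed

lemma borel_measurable_D_norm: "(\<lambda>x::'a::euclidean_space. D k (norm x)) \<in> borel_measurable borel"
  by (intro borel_measurable_continuous_onI continuous_on_compose2[OF continuous_on_D continuous_on_norm_id])
    auto

end

lemma abs_divide_le:
  fixes a P b A :: real
  assumes "0 < b" "b \<le> P" "\<bar>a\<bar> \<le> A"
  shows "\<bar>a / P\<bar> \<le> A / b"
  using assms by (simp add: frac_le)

lemma radial_curvature_combination:
  "Lambda_rad N D r + 4 * (K_rad D r - H_tan D r)
     = - 2 * (D 2 r / D 0 r) + (real N + 1) * (((D 1 r)\<^sup>2 - 1) / (D 0 r)\<^sup>2)"
  unfolding Lambda_rad_def K_rad_def H_tan_def by (simp add: algebra_simps add_divide_distrib[symmetric])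

locale model_profile = derivative_tower +
  assumes D0_pos: "\<And>r. r > 0 \<Longrightarrow> D 0 r > 0"
    and D0_0: "D 0 0 = 0" and D1_0: "D 1 0 = 1" and D2_0: "D 2 0 = 0"
begin

lemma profile_upper_bounds:
  obtains C where "C \<ge> 0"
    "\<And>r. 0 \<le> r \<Longrightarrow> r \<le> R \<Longrightarrow> D 0 r \<le> C * r"
    "\<And>r. 0 \<le> r \<Longrightarrow> r \<le> R \<Longrightarrow> \<bar>D 1 r\<bar> \<le> C"
    "\<And>r. 0 \<le> r \<Longrightarrow> r \<le> R \<Longrightarrow> \<bar>D 2 r\<bar> \<le> C * r"
    "\<And>r. 0 \<le> r \<Longrightarrow> r \<le> R \<Longrightarrow> \<bar>D 1 r - 1\<bar> \<le> C * r\<^sup>2"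
    "\<And>r. 0 \<le> r \<Longrightarrow> r \<le> R \<Longrightarrow> \<bar>(D 1 r)\<^sup>2 - 1\<bar> \<le> C * r\<^sup>2"
proof -
  obtain B1 where B1: "B1 \<ge> 0" "\<And>r. 0 \<le> r \<Longrightarrow> r \<le> R \<Longrightarrow> \<bar>D 1 r\<bar> \<le> B1"
    using bounded_D[where k=1 and R=R] by blast
  obtain B3 where B3: "B3 \<ge> 0" "\<And>r. 0 \<le> r \<Longrightarrow> r \<le> R \<Longrightarrow> \<bar>D 3 r\<bar> \<le> B3"
    using bounded_D[where k=3 and R=R] by blast
  have D0_le: "D 0 r \<le> B1 * r" if r: "0 \<le> r" "r \<le> R" for r
  proof -
    obtain \<xi> where "\<xi> \<in> {0..r}" "D 0 r - D 0 0 = D 1 \<xi> * (r - 0)"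
      using mean_value_D[of 0 r 0] r by auto
    then show ?thesis
      using B1(2)[of \<xi>] r D0_0 mult_right_mono[of "D 1 \<xi>" B1 r] by auto
  qed
  have D2_le: "\<bar>D 2 r\<bar> \<le> B3 * r" if r: "0 \<le> r" "r \<le> R" for r
  proof -
    obtain \<xi> where "\<xi> \<in> {0..r}" "D 2 r - D 2 0 = D 3 \<xi> * (r - 0)"
      using mean_value_D[of 0 r 2] r by (auto simp: numeral_3_eq_3)
    then show ?thesis
      using B3(2)[of \<xi>] r D2_0 by (simp add: abs_mult mult_right_mono)
  qed
  have D1_minus_1: "\<bar>D 1 r - 1\<bar> \<le> B3 * r\<^sup>2" if r: "0 \<le> r" "r \<le> R" for r
  proof -
    obtain \<xi> where \<xi>: "\<xi> \<in> {0..r}" "D 1 r - D 1 0 = D 2 \<xi> * (r - 0)"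
      using mean_value_D[of 0 r 1] r by (auto simp: numeral_2_eq_2)
    have "\<bar>D 2 \<xi>\<bar> \<le> B3 * r"
      using D2_le[of \<xi>] \<xi>(1) r B3(1) mult_left_mono[of \<xi> r B3] by auto
    then show ?thesis
      using \<xi>(2) D1_0 r mult_right_mono[of "\<bar>D 2 \<xi>\<bar>" "B3 * r" r]
      by (simp add: abs_mult power2_eq_square mult.assoc)
  qed
  have D1_sq: "\<bar>(D 1 r)\<^sup>2 - 1\<bar> \<le> B3 * (B1 + 1) * r\<^sup>2" if r: "0 \<le> r" "r \<le> R" for r
  proof -
    have "\<bar>(D 1 r)\<^sup>2 - 1\<bar> = \<bar>D 1 r - 1\<bar> * \<bar>D 1 r + 1\<bar>"
      by (simp add: abs_mult[symmetric] power2_eq_square algebra_simps)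
    also have "\<dots> \<le> (B3 * r\<^sup>2) * (B1 + 1)"
      using D1_minus_1[OF r] B1(2)[OF r] B3(1) by (intro mult_mono) auto
    finally show ?thesis by (simp add: ac_simps)
  qed
  define C where "C = B1 + B3 + B3 * (B1 + 1)"
  have C: "0 \<le> C" "B1 \<le> C" "B3 \<le> C" "B3 * (B1 + 1) \<le> C"
    using B1(1) B3(1) by (auto simp: C_def)
  have scale: "x \<le> C * t" if "x \<le> b * t" "b \<le> C" "0 \<le> t" for x b t
    using that mult_right_mono[of b C t] by linarith
  show ?thesis
  proof (rule that[of C])
    fix r assume r: "0 \<le> r" "r \<le> R"
    show "D 0 r \<le> C * r" using scale[OF D0_le[OF r] C(2)] r by simp
    show "\<bar>D 1 r\<bar> \<le> C" using B1(2)[OF r] C(2) by linarith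
    show "\<bar>D 2 r\<bar> \<le> C * r" using scale[OF D2_le[OF r] C(3)] r by simp
    show "\<bar>D 1 r - 1\<bar> \<le> C * r\<^sup>2" using scale[OF D1_minus_1[OF r] C(3)] by simp
    show "\<bar>(D 1 r)\<^sup>2 - 1\<bar> \<le> C * r\<^sup>2" using scale[OF D1_sq[OF r] C(4)] by simp
  qed (rule C(1))
qed

text \<open>Near the pole \<open>D 0\<close> grows like \<open>r\<close> since \<open>D 1 0 = 1\<close>; away from it, it is bounded below
  by its positive minimum.\<close>
lemma profile_lower_bound:
  assumes R: "R > 0"
  obtains c where "c > 0" "\<And>r. 0 < r \<Longrightarrow> r \<le> R \<Longrightarrow> c * r \<le> D 0 r"
proof -
  obtain C where C: "C \<ge> 0" "\<And>r. 0 \<le> r \<Longrightarrow> r \<le> R \<Longrightarrow> D 0 r \<le> C * r"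
    "\<And>r. 0 \<le> r \<Longrightarrow> r \<le> R \<Longrightarrow> \<bar>D 1 r\<bar> \<le> C"
    "\<And>r. 0 \<le> r \<Longrightarrow> r \<le> R \<Longrightarrow> \<bar>D 2 r\<bar> \<le> C * r"
    "\<And>r. 0 \<le> r \<Longrightarrow> r \<le> R \<Longrightarrow> \<bar>D 1 r - 1\<bar> \<le> C * r\<^sup>2"
    "\<And>r. 0 \<le> r \<Longrightarrow> r \<le> R \<Longrightarrow> \<bar>(D 1 r)\<^sup>2 - 1\<bar> \<le> C * r\<^sup>2"
    using profile_upper_bounds[where R=R] by blast
  define \<delta> where "\<delta> = min (min 1 R) (1 / (2 * C + 2))"
  have \<delta>: "0 < \<delta>" "\<delta> \<le> R" "\<delta> \<le> 1" "\<delta> \<le> 1 / (2 * C + 2)"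
    using R C(1) by (auto simp: \<delta>_def)
  have near: "r / 2 \<le> D 0 r" if r: "0 \<le> r" "r \<le> \<delta>" for r
  proof -
    obtain \<xi> where \<xi>: "\<xi> \<in> {0..r}" "D 0 r - D 0 0 = D 1 \<xi> * (r - 0)"
      using mean_value_D[of 0 r 0] r by auto
    have "\<xi>\<^sup>2 \<le> \<xi>" "\<xi> \<le> 1 / (2 * C + 2)"
      using \<xi>(1) r \<delta> by (auto simp: power2_eq_square intro: mult_left_le_one_le)
    then have "C * \<xi>\<^sup>2 \<le> C * (1 / (2 * C + 2))"
      using C(1) by (meson mult_left_mono order_trans)
    also have "\<dots> \<le> 1 / 2"
      using C(1) by (simp add: field_simps)
    finally have "1 / 2 \<le> D 1 \<xi>"
      using C(5)[of \<xi>] \<xi>(1) r \<delta> by auto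
    then show ?thesis
      using \<xi>(2) D0_0 r mult_right_mono[of "1/2" "D 1 \<xi>" r] by simp
  qed
  obtain x0 where x0: "x0 \<in> {\<delta>..R}" "\<And>y. y \<in> {\<delta>..R} \<Longrightarrow> D 0 x0 \<le> D 0 y"
    using continuous_attains_inf[of "{\<delta>..R}" "D 0"] continuous_on_subset[OF continuous_on_D, of "{\<delta>..R}" 0] \<delta>
    by auto
  have m: "D 0 x0 > 0"
    using x0(1) \<delta> D0_pos by auto
  show ?thesis
  proof (rule that[of "min (1 / 2) (D 0 x0 / R)"])
    fix r assume r: "0 < r" "r \<le> R"
    show "min (1 / 2) (D 0 x0 / R) * r \<le> D 0 r"
    proof (cases "r \<le> \<delta>")
      case True
      have "min (1 / 2) (D 0 x0 / R) * r \<le> 1 / 2 * r"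
        by (rule mult_right_mono[OF min.cobounded1]) (use r in simp)
      moreover have "r / 2 \<le> D 0 r"
        using near r True by simp
      ultimately show ?thesis
        by linarith
    next
      case False
      have "min (1 / 2) (D 0 x0 / R) * r \<le> (D 0 x0 / R) * R"
        using r m R by (intro mult_mono) auto
      then show ?thesis
        using x0(2)[of r] False r R by auto
    qed
  qed (use m R in auto)
qed

lemma profile_coefficient_bounds:
  assumes R: "R > 0"
  obtains K where "K \<ge> 0"
    "\<And>r. 0 < r \<Longrightarrow> r \<le> R \<Longrightarrow> D 0 r / r \<le> K"
    "\<And>r. 0 < r \<Longrightarrow> r \<le> R \<Longrightarrow> \<bar>D 1 r / D 0 r\<bar> \<le> K / r"
    "\<And>r. 0 < r \<Longrightarrow> r \<le> R \<Longrightarrow> 1 / (D 0 r)\<^sup>2 \<le> K / r\<^sup>2"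
    "\<And>r. 0 < r \<Longrightarrow> r \<le> R \<Longrightarrow> \<bar>Lambda_rad N D r + 4 * (K_rad D r - H_tan D r)\<bar> \<le> K"
proof -
  obtain c where c: "c > 0" "\<And>r. 0 < r \<Longrightarrow> r \<le> R \<Longrightarrow> c * r \<le> D 0 r"
    using profile_lower_bound[OF R] by blast
  obtain C where C: "C \<ge> 0" "\<And>r. 0 \<le> r \<Longrightarrow> r \<le> R \<Longrightarrow> D 0 r \<le> C * r"
    "\<And>r. 0 \<le> r \<Longrightarrow> r \<le> R \<Longrightarrow> \<bar>D 1 r\<bar> \<le> C"
    "\<And>r. 0 \<le> r \<Longrightarrow> r \<le> R \<Longrightarrow> \<bar>D 2 r\<bar> \<le> C * r"
    "\<And>r. 0 \<le> r \<Longrightarrow> r \<le> R \<Longrightarrow> \<bar>D 1 r - 1\<bar> \<le> C * r\<^sup>2"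
    "\<And>r. 0 \<le> r \<Longrightarrow> r \<le> R \<Longrightarrow> \<bar>(D 1 r)\<^sup>2 - 1\<bar> \<le> C * r\<^sup>2"
    using profile_upper_bounds[where R=R] by blast
  define K where "K = C + C / c + 1 / c\<^sup>2 + (2 * (C / c) + \<bar>real N + 1\<bar> * (C / c\<^sup>2))"
  have "0 \<le> C / c" "0 \<le> 1 / c\<^sup>2" "0 \<le> \<bar>real N + 1\<bar> * (C / c\<^sup>2)"
    using C(1) c(1) by auto
  then have K: "C \<le> K" "C / c \<le> K" "1 / c\<^sup>2 \<le> K" "2 * (C / c) + \<bar>real N + 1\<bar> * (C / c\<^sup>2) \<le> K"
    using C(1) unfolding K_def by linarith+
  show ?thesis
  proof (rule that[of K])
    fix r assume r: "0 < r" "r \<le> R"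
    have P: "0 < c * r" "c * r \<le> D 0 r" "0 < (c * r)\<^sup>2" "(c * r)\<^sup>2 \<le> (D 0 r)\<^sup>2"
      using c r by (auto intro!: power_mono)
    have "D 0 r \<le> K * r"
      using C(2)[of r] r mult_right_mono[OF K(1), of r] by linarith
    then show "D 0 r / r \<le> K"
      using r by (simp add: pos_divide_le_eq)
    show "\<bar>D 1 r / D 0 r\<bar> \<le> K / r"
      using abs_divide_le[OF P(1,2) C(3)[of r]] r divide_right_mono[OF K(2), of r] by simp
    show "1 / (D 0 r)\<^sup>2 \<le> K / r\<^sup>2"
      using abs_divide_le[OF P(3,4), of 1 1] r divide_right_mono[OF K(3), of "r\<^sup>2"]
      by (simp add: power_mult_distrib)
    have "\<bar>D 2 r / D 0 r\<bar> \<le> C / c" "\<bar>((D 1 r)\<^sup>2 - 1) / (D 0 r)\<^sup>2\<bar> \<le> C / c\<^sup>2"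
      using abs_divide_le[OF P(1,2) C(4)[of r]] abs_divide_le[OF P(3,4) C(6)[of r]] r
      by (simp_all add: power_mult_distrib)
    then have "\<bar>Lambda_rad N D r + 4 * (K_rad D r - H_tan D r)\<bar> \<le> 2 * (C / c) + \<bar>real N + 1\<bar> * (C / c\<^sup>2)"
      unfolding radial_curvature_combination abs_le_iff
      by (smt (verit, best) abs_le_iff abs_mult mult_left_mono abs_ge_zero)
    then show "\<bar>Lambda_rad N D r + 4 * (K_rad D r - H_tan D r)\<bar> \<le> K"
      using K(4) by linarith
  qed (use K C(1) in linarith)
qed

end

section \<open>The Hardy flux\<close>

text \<open>In dimension \<open>N = m + 3\<close>, with \<open>P = \<psi> r\<close>, \<open>Q = \<psi>' r\<close> and \<open>v\<close> the radial derivative of \<open>u\<close>;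
  the shift by 3 keeps all exponents free of truncated subtraction.\<close>
definition hardy_flux :: "nat \<Rightarrow> real \<Rightarrow> real \<Rightarrow> real \<Rightarrow> real \<Rightarrow> real" where
  "hardy_flux m r P Q v = v\<^sup>2 * (real (m + 2) / 2 * Q * P ^ (m + 1) + P ^ (m + 2) / (2 * r))"

definition hardy_flux_deriv ::
    "nat \<Rightarrow> real \<Rightarrow> real \<Rightarrow> real \<Rightarrow> real \<Rightarrow> real \<Rightarrow> real \<Rightarrow> real \<Rightarrow> real" where
  "hardy_flux_deriv m r P Q P' Q' v v' =
     2 * v * v' * (real (m + 2) / 2 * Q * P ^ (m + 1) + P ^ (m + 2) / (2 * r))
     + v\<^sup>2 * (real (m + 2) / 2 * Q' * P ^ (m + 1) + real (m + 2) / 2 * Q * (real (m + 1) * P ^ m * P')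
         + real (m + 2) * P ^ (m + 1) * P' / (2 * r) - P ^ (m + 2) / (2 * r\<^sup>2))"

lemma has_real_derivative_hardy_flux:
  fixes v p q :: "real \<Rightarrow> real"
  assumes v: "(v has_real_derivative v') (at \<rho>)" and p: "(p has_real_derivative p') (at \<rho>)"
    and q: "(q has_real_derivative q') (at \<rho>)" and \<rho>: "\<rho> > 0"
  shows "((\<lambda>t. hardy_flux m t (p t) (q t) (v t)) has_real_derivative
      hardy_flux_deriv m \<rho> (p \<rho>) (q \<rho>) p' q' (v \<rho>) v') (at \<rho>)"
proof -
  define a where "a = real (m + 2) / 2"
  have d1: "((\<lambda>t. (v t)\<^sup>2) has_real_derivative 2 * v \<rho> * v') (at \<rho>)"
    using DERIV_power[OF v, of 2] by (simp add: algebra_simps)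
  have d2: "((\<lambda>t. (p t) ^ (m + 1)) has_real_derivative real (m + 1) * (p \<rho>) ^ m * p') (at \<rho>)"
    using DERIV_power[OF p, of "m + 1"] by (simp add: algebra_simps)
  have d3: "((\<lambda>t. (p t) ^ (m + 2)) has_real_derivative real (m + 2) * (p \<rho>) ^ (m + 1) * p') (at \<rho>)"
    using DERIV_power[OF p, of "m + 2"] by (simp add: algebra_simps)
  have d4: "((\<lambda>t. a * q t * (p t) ^ (m + 1)) has_real_derivative
      a * q' * (p \<rho>) ^ (m + 1) + a * q \<rho> * (real (m + 1) * (p \<rho>) ^ m * p')) (at \<rho>)"
    by (rule DERIV_cong[OF DERIV_mult[OF DERIV_cmult[OF q, of a] d2]]) (simp add: algebra_simps)
  have "((\<lambda>t. (p t) ^ (m + 2) / (2 * t)) has_real_derivative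
      (real (m + 2) * (p \<rho>) ^ (m + 1) * p' * (2 * \<rho>) - (p \<rho>) ^ (m + 2) * 2) / ((2 * \<rho>) * (2 * \<rho>))) (at \<rho>)"
    using \<rho> by (intro DERIV_divide[OF d3] DERIV_cmult_Id[of 2, THEN DERIV_cong]) simp_all
  moreover have "(real (m + 2) * (p \<rho>) ^ (m + 1) * p' * (2 * \<rho>) - (p \<rho>) ^ (m + 2) * 2) / ((2 * \<rho>) * (2 * \<rho>))
      = real (m + 2) * (p \<rho>) ^ (m + 1) * p' / (2 * \<rho>) - (p \<rho>) ^ (m + 2) / (2 * \<rho>\<^sup>2)"
    using \<rho> by (simp add: field_simps power2_eq_square)
  ultimately have d5: "((\<lambda>t. (p t) ^ (m + 2) / (2 * t)) has_real_derivative
      real (m + 2) * (p \<rho>) ^ (m + 1) * p' / (2 * \<rho>) - (p \<rho>) ^ (m + 2) / (2 * \<rho>\<^sup>2)) (at \<rho>)"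
    by simp
  show ?thesis
    unfolding hardy_flux_def hardy_flux_deriv_def a_def[symmetric]
    by (rule DERIV_cong[OF DERIV_mult[OF d1 DERIV_add[OF d4 d5]]]) (simp add: algebra_simps)
qed

text \<open>Completing the square: along a ray, the weighted Hardy remainder is a square plus the
  derivative of the flux.\<close>
lemma hardy_remainder_identity:
  fixes D :: "nat \<Rightarrow> real \<Rightarrow> real"
  assumes N: "N = m + 3" and r: "r > 0" and P: "D 0 r = P" "P > 0"
  shows "((w + real (N - 1) * (D 1 r / D 0 r) * v)\<^sup>2 * (P / r) ^ (N - 1)
     - (real N - 1) / 4 * ((Lambda_rad N D r + 4 * (K_rad D r - H_tan D r)) * v\<^sup>2 * (P / r) ^ (N - 1))
     - 1 / 4 * ((1 / r\<^sup>2) * v\<^sup>2 * (P / r) ^ (N - 1))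
     - ((real N)\<^sup>2 - 1) / 4 * ((1 / P\<^sup>2) * v\<^sup>2 * (P / r) ^ (N - 1))) * r ^ (N - 1)
   = P ^ (m + 2) * (w + real (m + 2) / 2 * (D 1 r / P) * v - v / (2 * r))\<^sup>2
     + hardy_flux_deriv m r P (D 1 r) (D 1 r) (D 2 r) v w"
proof -
  have "N - 1 = m + 2" "real N = real m + 3" using N by simp_all
  moreover have "P ^ (m + 2) = P ^ m * P\<^sup>2" "P ^ (m + 1) = P ^ m * P"
    by (simp_all add: power_add power2_eq_square)
  moreover have "(P / r) ^ (m + 2) = P ^ m * P\<^sup>2 / r ^ (m + 2)"
    by (simp add: power_divide power_add power2_eq_square)
  ultimately show ?thesis
    unfolding hardy_flux_deriv_def Lambda_rad_def K_rad_def H_tan_def P(1) using P r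
    by (simp add: field_simps power2_eq_square)
qed

lemma hardy_flux_bound:
  assumes \<epsilon>: "0 < \<epsilon>" "\<epsilon> \<le> 1" and P: "0 \<le> P" "P \<le> C * \<epsilon>" and Q: "\<bar>Q\<bar> \<le> C"
    and v: "\<bar>v\<bar> \<le> M" and C: "C \<ge> 0"
  shows "hardy_flux m \<epsilon> P Q v \<le> M\<^sup>2 * C ^ (m + 2) * (real (m + 2) / 2 + 1 / 2) * \<epsilon>"
proof -
  define a where "a = real (m + 2) / 2"
  have \<epsilon>_pow: "\<epsilon> ^ (m + 1) \<le> \<epsilon>"
    using \<epsilon> by (simp add: power_le_one mult_left_le_one_le)
  have "\<bar>a * Q * P ^ (m + 1)\<bar> = a * (\<bar>Q\<bar> * P ^ (m + 1))"
    using P by (simp add: a_def abs_mult)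
  also have "\<dots> \<le> a * (C * (C * \<epsilon>) ^ (m + 1))"
    using Q P C by (intro mult_left_mono mult_mono power_mono) (auto simp: a_def)
  also have "\<dots> = a * C ^ (m + 2) * \<epsilon> ^ (m + 1)"
    by (simp add: power_mult_distrib)
  also have "\<dots> \<le> a * C ^ (m + 2) * \<epsilon>"
    using \<epsilon>_pow C by (intro mult_left_mono) (auto simp: a_def)
  finally have t1: "\<bar>a * Q * P ^ (m + 1)\<bar> \<le> a * C ^ (m + 2) * \<epsilon>" .
  have "P ^ (m + 2) / (2 * \<epsilon>) \<le> (C * \<epsilon>) ^ (m + 2) / (2 * \<epsilon>)"
    using P \<epsilon> by (intro divide_right_mono power_mono) auto
  also have "\<dots> = C ^ (m + 2) * \<epsilon> ^ (m + 1) / 2"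
    using \<epsilon> by (simp add: field_simps)
  also have "\<dots> \<le> C ^ (m + 2) * \<epsilon> / 2"
    using \<epsilon>_pow C by (intro divide_right_mono mult_left_mono) auto
  finally have t2: "\<bar>P ^ (m + 2) / (2 * \<epsilon>)\<bar> \<le> C ^ (m + 2) * \<epsilon> / 2"
    using P \<epsilon> by simp
  have "hardy_flux m \<epsilon> P Q v \<le> v\<^sup>2 * \<bar>a * Q * P ^ (m + 1) + P ^ (m + 2) / (2 * \<epsilon>)\<bar>"
    unfolding hardy_flux_def a_def[symmetric] by (intro mult_left_mono) auto
  also have "\<dots> \<le> M\<^sup>2 * (a * C ^ (m + 2) * \<epsilon> + C ^ (m + 2) * \<epsilon> / 2)"
  proof (rule mult_mono)
    show "v\<^sup>2 \<le> M\<^sup>2"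
      using power_mono[OF v abs_ge_zero, of 2] by simp
    show "\<bar>a * Q * P ^ (m + 1) + P ^ (m + 2) / (2 * \<epsilon>)\<bar> \<le> a * C ^ (m + 2) * \<epsilon> + C ^ (m + 2) * \<epsilon> / 2"
      using t1 t2 abs_triangle_ineq[of "a * Q * P ^ (m + 1)" "P ^ (m + 2) / (2 * \<epsilon>)"] by linarith
  qed auto
  finally show ?thesis
    by (simp add: a_def algebra_simps)
qed

section \<open>The radial Hardy inequality\<close>

lemma radial_derivs_along_ray:
  assumes "norm \<omega> = 1" "\<rho> > 0"
  shows "radial_deriv u (\<rho> *\<^sub>R \<omega>) = deriv (\<lambda>t. u (t *\<^sub>R \<omega>)) \<rho>"
    and "radial_deriv2 u (\<rho> *\<^sub>R \<omega>) = deriv (deriv (\<lambda>t. u (t *\<^sub>R \<omega>))) \<rho>"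
  using assms by (simp_all add: radial_deriv_def radial_deriv2_def sgn_scaleR sgn_div_norm)

lemma ray_integral_ennreal:
  fixes f :: "'a::euclidean_space \<Rightarrow> real"
  shows "ray_integral (\<lambda>x. ennreal (f x)) \<omega>
    = (\<integral>\<^sup>+\<rho>. ennreal (indicator {0<..} \<rho> * (f (\<rho> *\<^sub>R \<omega>) * \<rho> ^ (DIM('a) - 1))) \<partial>lborel)"
  unfolding ray_integral_def
  by (intro nn_integral_cong) (auto simp: indicator_def ennreal_mult'')

locale radial_model = model_profile D for D :: "nat \<Rightarrow> real \<Rightarrow> real" +
  fixes psi :: "real \<Rightarrow> real" and u :: "'a::euclidean_space \<Rightarrow> real"
  assumes dim: "DIM('a) \<ge> 3"
    and D0_eq_psi: "\<forall>x\<ge>0. D 0 x = psi x"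
    and smooth_u: "smooth_fun u"
    and compact_support_u: "compact_support u"
begin

definition laplacian_density :: "'a \<Rightarrow> real" where
  "laplacian_density x = (radial_laplacian DIM('a) D u x)\<^sup>2 * vol_density DIM('a) psi x"

definition curvature_density :: "'a \<Rightarrow> real" where
  "curvature_density x = (Lambda_rad DIM('a) D (norm x) + 4 * (K_rad D (norm x) - H_tan D (norm x)))
     * (radial_deriv u x)\<^sup>2 * vol_density DIM('a) psi x"

definition hardy_density :: "'a \<Rightarrow> real" where
  "hardy_density x = (1 / (norm x)\<^sup>2) * (radial_deriv u x)\<^sup>2 * vol_density DIM('a) psi x"

definition psi_density :: "'a \<Rightarrow> real" where
  "psi_density x = (1 / (psi (norm x))\<^sup>2) * (radial_deriv u x)\<^sup>2 * vol_density DIM('a) psi x"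

definition remainder :: "'a \<Rightarrow> real" where
  "remainder x = laplacian_density x - (real DIM('a) - 1) / 4 * curvature_density x
     - 1 / 4 * hardy_density x - ((real DIM('a))\<^sup>2 - 1) / 4 * psi_density x"

lemma psi_norm: "psi (norm x) = D 0 (norm x)"
  using D0_eq_psi by simp

lemma vol_density_eq: "vol_density DIM('a) psi x = (D 0 (norm x) / norm x) ^ (DIM('a) - 1)"
  by (simp add: vol_density_def psi_norm)

lemma borel_measurable_densities [measurable]:
  "laplacian_density \<in> borel_measurable borel" "curvature_density \<in> borel_measurable borel"
  "hardy_density \<in> borel_measurable borel" "psi_density \<in> borel_measurable borel"
  "remainder \<in> borel_measurable borel"
proof -
  have [measurable]: "radial_deriv u \<in> borel_measurable borel" "radial_deriv2 u \<in> borel_measurable borel"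
    "(\<lambda>x::'a. D k (norm x)) \<in> borel_measurable borel" for k
    using borel_measurable_radial_deriv[OF smooth_u] borel_measurable_radial_deriv2[OF smooth_u]
      borel_measurable_D_norm by auto
  show "laplacian_density \<in> borel_measurable borel" "curvature_density \<in> borel_measurable borel"
    "hardy_density \<in> borel_measurable borel" "psi_density \<in> borel_measurable borel"
    unfolding laplacian_density_def curvature_density_def hardy_density_def psi_density_def
      radial_laplacian_def Lambda_rad_def K_rad_def H_tan_def vol_density_eq psi_norm
    by measurable
  then show "remainder \<in> borel_measurable borel"
    unfolding remainder_def by measurable
qed

lemma support_radius:
  obtains R where "R > 0" "\<And>x. R \<le> norm x \<Longrightarrow> radial_deriv u x = 0 \<and> radial_deriv2 u x = 0"
proof -
  obtain R0 where R0: "R0 > 0" "\<And>x. R0 \<le> norm x \<Longrightarrow> u x = 0"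
    using compact_support_vanishes_outside_ball[OF compact_support_u] by blast
  show ?thesis
    using R0 radial_derivs_vanish[of R0 u] by (intro that[of "R0 + 1"]) auto
qed

lemma densities_vanish:
  assumes "radial_deriv u x = 0" "radial_deriv2 u x = 0"
  shows "laplacian_density x = 0" "curvature_density x = 0" "hardy_density x = 0" "psi_density x = 0"
  using assms by (simp_all add: laplacian_density_def curvature_density_def hardy_density_def
      psi_density_def radial_laplacian_def)

lemma vol_density_zero: "vol_density DIM('a) psi 0 = 0"
  using dim by (simp add: vol_density_def)

definition radial_factors_bounded :: "real \<Rightarrow> real \<Rightarrow> bool" where
  "radial_factors_bounded R K \<longleftrightarrow> (\<forall>x. 0 < norm x \<longrightarrow> norm x \<le> R \<longrightarrow>
     0 \<le> vol_density DIM('a) psi x \<and> vol_density DIM('a) psi x \<le> K \<and>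
     \<bar>radial_deriv u x\<bar> \<le> K \<and> \<bar>radial_deriv2 u x\<bar> \<le> K \<and>
     (radial_deriv u x)\<^sup>2 * vol_density DIM('a) psi x \<le> K \<and>
     \<bar>D 1 (norm x) / D 0 (norm x)\<bar> \<le> K / norm x \<and> 1 / (psi (norm x))\<^sup>2 \<le> K / (norm x)\<^sup>2 \<and>
     \<bar>Lambda_rad DIM('a) D (norm x) + 4 * (K_rad D (norm x) - H_tan D (norm x))\<bar> \<le> K)"

lemma radial_factors_bounded_exists:
  assumes R: "R > 0"
  obtains K where "K \<ge> 0" "radial_factors_bounded R K"
proof -
  obtain Kp where Kp: "Kp \<ge> 0"
    "\<And>r. 0 < r \<Longrightarrow> r \<le> R \<Longrightarrow> D 0 r / r \<le> Kp"
    "\<And>r. 0 < r \<Longrightarrow> r \<le> R \<Longrightarrow> \<bar>D 1 r / D 0 r\<bar> \<le> Kp / r"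
    "\<And>r. 0 < r \<Longrightarrow> r \<le> R \<Longrightarrow> 1 / (D 0 r)\<^sup>2 \<le> Kp / r\<^sup>2"
    "\<And>r. 0 < r \<Longrightarrow> r \<le> R \<Longrightarrow> \<bar>Lambda_rad DIM('a) D r + 4 * (K_rad D r - H_tan D r)\<bar> \<le> Kp"
    using profile_coefficient_bounds[OF R] by blast
  obtain M where M: "M \<ge> 0" "\<And>x. norm x \<le> R \<Longrightarrow> \<bar>radial_deriv u x\<bar> \<le> M"
    "\<And>x. norm x \<le> R \<Longrightarrow> \<bar>radial_deriv2 u x\<bar> \<le> M"
    using radial_derivs_bounded[OF smooth_u] by blast
  define V where "V = Kp ^ (DIM('a) - 1)"
  define K where "K = V + Kp + M + M\<^sup>2 * V"
  have V: "0 \<le> V" using Kp(1) by (simp add: V_def)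
  then have K: "V \<le> K" "Kp \<le> K" "M \<le> K" "M\<^sup>2 * V \<le> K"
    using Kp(1) M(1) by (simp_all add: K_def)
  show ?thesis
  proof (rule that)
    show "K \<ge> 0" using K(1) V by linarith
    show "radial_factors_bounded R K"
      unfolding radial_factors_bounded_def
    proof (intro allI impI)
      fix x :: 'a assume x: "0 < norm x" "norm x \<le> R"
      have vol: "0 \<le> vol_density DIM('a) psi x" "vol_density DIM('a) psi x \<le> V"
        using D0_pos[OF x(1)] Kp(2)[OF x] unfolding vol_density_eq V_def by (auto intro!: power_mono)
      moreover have "(radial_deriv u x)\<^sup>2 * vol_density DIM('a) psi x \<le> M\<^sup>2 * V"
        using vol M(2)[OF x(2)] by (intro mult_mono) (auto simp: abs_le_square_iff[symmetric])
      moreover have "\<bar>D 1 (norm x) / D 0 (norm x)\<bar> \<le> K / norm x"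
        using Kp(3)[OF x] divide_right_mono[OF K(2), of "norm x"] by simp
      moreover have "1 / (psi (norm x))\<^sup>2 \<le> K / (norm x)\<^sup>2"
        using Kp(4)[OF x] divide_right_mono[OF K(2), of "(norm x)\<^sup>2"] by (simp add: psi_norm)
      ultimately show "0 \<le> vol_density DIM('a) psi x \<and> vol_density DIM('a) psi x \<le> K \<and>
        \<bar>radial_deriv u x\<bar> \<le> K \<and> \<bar>radial_deriv2 u x\<bar> \<le> K \<and>
        (radial_deriv u x)\<^sup>2 * vol_density DIM('a) psi x \<le> K \<and>
        \<bar>D 1 (norm x) / D 0 (norm x)\<bar> \<le> K / norm x \<and> 1 / (psi (norm x))\<^sup>2 \<le> K / (norm x)\<^sup>2 \<and>
        \<bar>Lambda_rad DIM('a) D (norm x) + 4 * (K_rad D (norm x) - H_tan D (norm x))\<bar> \<le> K"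
        using K M(2,3)[OF x(2)] Kp(5)[OF x] by linarith
    qed
  qed
qed

lemma laplacian_density_le:
  assumes K: "radial_factors_bounded R K" and x: "norm x \<le> R"
  shows "\<bar>laplacian_density x\<bar> \<le> (K * R + real (DIM('a) - 1) * K\<^sup>2)\<^sup>2 * K / (norm x)\<^sup>2"
proof (cases "x = 0")
  case False
  define r where "r = norm x"
  define n where "n = real (DIM('a) - 1)"
  have r: "0 < r" "r \<le> R" using False x by (simp_all add: r_def)
  note K = K[unfolded radial_factors_bounded_def, rule_format, OF r[unfolded r_def], folded r_def]
  have n: "0 \<le> n" by (simp add: n_def)
  have "\<bar>n * (D 1 r / D 0 r) * radial_deriv u x\<bar> = n * (\<bar>D 1 r / D 0 r\<bar> * \<bar>radial_deriv u x\<bar>)"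
    using n by (simp add: abs_mult)
  also have "\<dots> \<le> n * ((K / r) * K)"
    using K n r by (intro mult_left_mono mult_mono) auto
  finally have "\<bar>n * (D 1 r / D 0 r) * radial_deriv u x\<bar> \<le> n * ((K / r) * K)" .
  then have "\<bar>radial_laplacian DIM('a) D u x\<bar> \<le> K + n * ((K / r) * K)"
    unfolding radial_laplacian_def r_def[symmetric] n_def[symmetric]
    using K order_trans[OF abs_triangle_ineq add_mono] by blast
  also have "\<dots> = (K * r + n * K\<^sup>2) / r"
    using r by (simp add: field_simps power2_eq_square)
  also have "\<dots> \<le> (K * R + n * K\<^sup>2) / r"
    using r K by (intro divide_right_mono add_right_mono mult_left_mono) auto
  finally have "(radial_laplacian DIM('a) D u x)\<^sup>2 \<le> ((K * R + n * K\<^sup>2) / r)\<^sup>2"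
    using power_mono[OF _ abs_ge_zero, of _ _ 2] by fastforce
  then have "laplacian_density x \<le> ((K * R + n * K\<^sup>2) / r)\<^sup>2 * K"
    unfolding laplacian_density_def using K by (intro mult_mono) auto
  then show ?thesis
    using K by (simp add: laplacian_density_def n_def r_def power_divide)
qed (simp add: laplacian_density_def vol_density_zero)

lemma curvature_density_le:
  assumes K: "radial_factors_bounded R K" and x: "norm x \<le> R"
  shows "\<bar>curvature_density x\<bar> \<le> K\<^sup>2 * R\<^sup>2 / (norm x)\<^sup>2"
proof (cases "x = 0")
  case False
  have r: "0 < norm x" using False by simp
  note K = K[unfolded radial_factors_bounded_def, rule_format, OF r x]
  have "\<bar>curvature_density x\<bar> \<le> K * K"
    unfolding curvature_density_def abs_mult mult.assoc
    using K by (intro mult_mono) auto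
  also have "\<dots> \<le> K * K * (R\<^sup>2 / (norm x)\<^sup>2)"
  proof -
    have "1 \<le> R\<^sup>2 / (norm x)\<^sup>2"
      using r x by (simp add: power_mono)
    from mult_left_mono[OF this, of "K * K"] show ?thesis by simp
  qed
  also have "\<dots> = K\<^sup>2 * R\<^sup>2 / (norm x)\<^sup>2"
    by (simp add: power2_eq_square)
  finally show ?thesis .
qed (simp add: curvature_density_def vol_density_zero)

lemma hardy_density_le:
  assumes K: "radial_factors_bounded R K" and x: "norm x \<le> R"
  shows "\<bar>hardy_density x\<bar> \<le> K / (norm x)\<^sup>2"
proof (cases "x = 0")
  case False
  note K = K[unfolded radial_factors_bounded_def, rule_format, OF _ x]
  show ?thesis
    using K False unfolding hardy_density_def by (simp add: abs_mult divide_right_mono)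
qed (simp add: hardy_density_def vol_density_zero)

lemma psi_density_le:
  assumes K: "radial_factors_bounded R K" and x: "norm x \<le> R"
  shows "\<bar>psi_density x\<bar> \<le> K\<^sup>2 / (norm x)\<^sup>2"
proof (cases "x = 0")
  case False
  note K = K[unfolded radial_factors_bounded_def, rule_format, OF _ x]
  have "\<bar>psi_density x\<bar> = 1 / (psi (norm x))\<^sup>2 * ((radial_deriv u x)\<^sup>2 * vol_density DIM('a) psi x)"
    using K False unfolding psi_density_def by (simp add: abs_mult)
  also have "\<dots> \<le> K / (norm x)\<^sup>2 * K"
    using K False by (intro mult_mono) auto
  finally show ?thesis
    by (simp add: power2_eq_square)
qed (simp add: psi_density_def vol_density_zero)

lemma integrable_densities:
  "integrable lborel laplacian_density" "integrable lborel curvature_density"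
  "integrable lborel hardy_density" "integrable lborel psi_density"
proof -
  obtain R where R: "R > 0" "\<And>x. R \<le> norm x \<Longrightarrow> radial_deriv u x = 0 \<and> radial_deriv2 u x = 0"
    using support_radius by blast
  obtain K where K: "K \<ge> 0" "radial_factors_bounded R K"
    using radial_factors_bounded_exists[OF R(1)] by blast
  have vanish: "laplacian_density x = 0 \<and> curvature_density x = 0 \<and> hardy_density x = 0 \<and>
      psi_density x = 0" if "R < norm x" for x
    using that R(2)[of x] densities_vanish[of x] by simp
  show "integrable lborel laplacian_density"
    using vanish laplacian_density_le[OF K(2)] K(1) R(1)
    by (intro integrable_inverse_square_bounded[OF dim, where K="(K * R + real (DIM('a) - 1) * K\<^sup>2)\<^sup>2 * K"]) auto
  show "integrable lborel curvature_density"
    using vanish curvature_density_le[OF K(2)] K(1) R(1)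
    by (intro integrable_inverse_square_bounded[OF dim, where K="K\<^sup>2 * R\<^sup>2"]) auto
  show "integrable lborel hardy_density"
    using vanish hardy_density_le[OF K(2)] K(1) R(1)
    by (intro integrable_inverse_square_bounded[OF dim, where K="K"]) auto
  show "integrable lborel psi_density"
    using vanish psi_density_le[OF K(2)] K(1) R(1)
    by (intro integrable_inverse_square_bounded[OF dim, where K="K\<^sup>2"]) auto
qed

lemma integral_remainder:
  "integral\<^sup>L lborel remainder = integral\<^sup>L lborel laplacian_density
     - (real DIM('a) - 1) / 4 * integral\<^sup>L lborel curvature_density
     - 1 / 4 * integral\<^sup>L lborel hardy_density - ((real DIM('a))\<^sup>2 - 1) / 4 * integral\<^sup>L lborel psi_density"
  unfolding remainder_def[abs_def] using integrable_densities by simp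

lemma remainder_along_ray:
  assumes \<omega>: "norm \<omega> = 1" and \<rho>: "\<rho> > 0" and m: "DIM('a) = m + 3"
  defines "v \<equiv> deriv (\<lambda>t. u (t *\<^sub>R \<omega>))"
  shows "remainder (\<rho> *\<^sub>R \<omega>) * \<rho> ^ (DIM('a) - 1)
    = D 0 \<rho> ^ (m + 2) * (deriv v \<rho> + real (m + 2) / 2 * (D 1 \<rho> / D 0 \<rho>) * v \<rho> - v \<rho> / (2 * \<rho>))\<^sup>2
      + hardy_flux_deriv m \<rho> (D 0 \<rho>) (D 1 \<rho>) (D 1 \<rho>) (D 2 \<rho>) (v \<rho>) (deriv v \<rho>)"
proof -
  have ray: "norm (\<rho> *\<^sub>R \<omega>) = \<rho>" "psi \<rho> = D 0 \<rho>"
    using \<omega> \<rho> D0_eq_psi by auto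
  show ?thesis
    unfolding remainder_def laplacian_density_def curvature_density_def hardy_density_def
      psi_density_def radial_laplacian_def vol_density_def radial_derivs_along_ray[OF \<omega> \<rho>]
      v_def[symmetric] ray
    by (rule hardy_remainder_identity[where D=D, OF m \<rho> refl D0_pos[OF \<rho>]])
qed

definition ray_flux :: "'a \<Rightarrow> real \<Rightarrow> real" where
  "ray_flux \<omega> t = hardy_flux (DIM('a) - 3) t (D 0 t) (D 1 t) (deriv (\<lambda>s. u (s *\<^sub>R \<omega>)) t)"

lemma ray_flux_deriv_le_remainder:
  assumes \<omega>: "norm \<omega> = 1" and \<rho>: "\<rho> > 0"
  shows "(ray_flux \<omega> has_real_derivative deriv (ray_flux \<omega>) \<rho>) (at \<rho>)"
    and "deriv (ray_flux \<omega>) \<rho> \<le> remainder (\<rho> *\<^sub>R \<omega>) * \<rho> ^ (DIM('a) - 1)"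
proof -
  define m where "m = DIM('a) - 3"
  have m: "DIM('a) = m + 3" using dim by (simp add: m_def)
  define v where "v = deriv (\<lambda>t. u (t *\<^sub>R \<omega>))"
  have "v = (\<lambda>t. iter_dderiv [\<omega>] u (t *\<^sub>R \<omega>))"
    using smooth_fun_deriv_along_ray[OF smooth_u, of "[]" \<omega>] by (simp add: v_def)
  then have "(v has_real_derivative deriv v \<rho>) (at \<rho>)"
    using smooth_fun_has_derivative_along_ray[OF smooth_u, of "[\<omega>]" \<omega> \<rho>] DERIV_imp_deriv by metis
  from has_real_derivative_hardy_flux[OF this has_real_derivative_D_at[OF \<rho>] has_real_derivative_D_at[OF \<rho>] \<rho>]
  have flux: "(ray_flux \<omega> has_real_derivative
      hardy_flux_deriv m \<rho> (D 0 \<rho>) (D 1 \<rho>) (D 1 \<rho>) (D 2 \<rho>) (v \<rho>) (deriv v \<rho>)) (at \<rho>)"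
    unfolding ray_flux_def[abs_def] m_def[symmetric] v_def[symmetric] by (simp add: numeral_2_eq_2)
  then show "(ray_flux \<omega> has_real_derivative deriv (ray_flux \<omega>) \<rho>) (at \<rho>)"
    using DERIV_imp_deriv by metis
  show "deriv (ray_flux \<omega>) \<rho> \<le> remainder (\<rho> *\<^sub>R \<omega>) * \<rho> ^ (DIM('a) - 1)"
    using DERIV_imp_deriv[OF flux] remainder_along_ray[OF \<omega> \<rho> m] D0_pos[OF \<rho>] by (simp add: v_def)
qed

text \<open>The flux is \<open>O(\<epsilon>)\<close> at the pole because \<open>D 0 \<epsilon> = O(\<epsilon>)\<close>.\<close>
lemma ray_flux_small:
  assumes \<omega>: "norm \<omega> = 1" and R: "R > 0"
  obtains K where "K \<ge> 0" "\<And>\<epsilon>. 0 < \<epsilon> \<Longrightarrow> \<epsilon> \<le> 1 \<Longrightarrow> \<epsilon> \<le> R \<Longrightarrow> ray_flux \<omega> \<epsilon> \<le> K * \<epsilon>"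
proof -
  obtain C where C: "C \<ge> 0" "\<And>r. 0 \<le> r \<Longrightarrow> r \<le> R \<Longrightarrow> D 0 r \<le> C * r"
    "\<And>r. 0 \<le> r \<Longrightarrow> r \<le> R \<Longrightarrow> \<bar>D 1 r\<bar> \<le> C"
    "\<And>r. 0 \<le> r \<Longrightarrow> r \<le> R \<Longrightarrow> \<bar>D 2 r\<bar> \<le> C * r"
    "\<And>r. 0 \<le> r \<Longrightarrow> r \<le> R \<Longrightarrow> \<bar>D 1 r - 1\<bar> \<le> C * r\<^sup>2"
    "\<And>r. 0 \<le> r \<Longrightarrow> r \<le> R \<Longrightarrow> \<bar>(D 1 r)\<^sup>2 - 1\<bar> \<le> C * r\<^sup>2"
    using profile_upper_bounds[where R=R] by blast
  obtain M where M: "M \<ge> 0" "\<And>x. norm x \<le> R \<Longrightarrow> \<bar>radial_deriv u x\<bar> \<le> M"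
    "\<And>x. norm x \<le> R \<Longrightarrow> \<bar>radial_deriv2 u x\<bar> \<le> M"
    using radial_derivs_bounded[OF smooth_u] by blast
  show ?thesis
  proof (rule that)
    fix \<epsilon> :: real assume \<epsilon>: "0 < \<epsilon>" "\<epsilon> \<le> 1" "\<epsilon> \<le> R"
    have "\<bar>deriv (\<lambda>s. u (s *\<^sub>R \<omega>)) \<epsilon>\<bar> \<le> M"
      using M(2)[of "\<epsilon> *\<^sub>R \<omega>"] radial_derivs_along_ray(1)[OF \<omega> \<epsilon>(1)] \<omega> \<epsilon> by simp
    then show "ray_flux \<omega> \<epsilon> \<le> M\<^sup>2 * C ^ (DIM('a) - 3 + 2) * (real (DIM('a) - 3 + 2) / 2 + 1 / 2) * \<epsilon>"
      unfolding ray_flux_def using \<epsilon> C D0_pos[OF \<epsilon>(1)] by (intro hardy_flux_bound) auto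
  qed (use C(1) M(1) in simp)
qed

lemma ray_flux_vanish:
  assumes \<omega>: "norm \<omega> = 1" and R: "R > 0" and vanish: "radial_deriv u (R *\<^sub>R \<omega>) = 0"
  shows "ray_flux \<omega> R = 0"
  using vanish radial_derivs_along_ray(1)[OF \<omega> R] by (simp add: ray_flux_def hardy_flux_def)

lemma remainder_le:
  assumes K: "radial_factors_bounded R K" "K \<ge> 0" and x: "norm x \<le> R"
  shows "\<bar>remainder x\<bar> \<le> ((K * R + real (DIM('a) - 1) * K\<^sup>2)\<^sup>2 * K
    + (real DIM('a) - 1) / 4 * (K\<^sup>2 * R\<^sup>2) + 1 / 4 * K + ((real DIM('a))\<^sup>2 - 1) / 4 * K\<^sup>2) / (norm x)\<^sup>2"
proof -
  define c1 where "c1 = (real DIM('a) - 1) / 4"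
  define c2 where "c2 = ((real DIM('a))\<^sup>2 - 1) / 4"
  have c: "0 \<le> c1" "0 \<le> c2"
    using dim by (auto simp: c1_def c2_def)
  have "\<bar>c1 * curvature_density x\<bar> \<le> c1 * (K\<^sup>2 * R\<^sup>2 / (norm x)\<^sup>2)"
    "\<bar>c2 * psi_density x\<bar> \<le> c2 * (K\<^sup>2 / (norm x)\<^sup>2)"
    using mult_left_mono[OF curvature_density_le[OF K(1) x] c(1)]
      mult_left_mono[OF psi_density_le[OF K(1) x] c(2)] c
    by (simp_all add: abs_mult)
  then show ?thesis
    using laplacian_density_le[OF K(1) x] hardy_density_le[OF K(1) x]
    unfolding remainder_def c1_def[symmetric] c2_def[symmetric] abs_le_iff
    by (simp add: add_divide_distrib diff_divide_distrib)
qed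

lemma ray_remainder_bound:
  assumes \<omega>: "norm \<omega> = 1" and R: "R > 0"
  obtains K where "K \<ge> 0" "\<And>\<rho>. 0 < \<rho> \<Longrightarrow> \<rho> \<le> R \<Longrightarrow> \<bar>remainder (\<rho> *\<^sub>R \<omega>) * \<rho> ^ (DIM('a) - 1)\<bar> \<le> K"
proof -
  obtain K where K: "K \<ge> 0" "radial_factors_bounded R K"
    using radial_factors_bounded_exists[OF R] by blast
  define KF where "KF = (K * R + real (DIM('a) - 1) * K\<^sup>2)\<^sup>2 * K
    + (real DIM('a) - 1) / 4 * (K\<^sup>2 * R\<^sup>2) + 1 / 4 * K + ((real DIM('a))\<^sup>2 - 1) / 4 * K\<^sup>2"
  have KF: "0 \<le> KF"
    using K(1) R dim by (simp add: KF_def)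
  show ?thesis
  proof (rule that)
    fix \<rho> :: real assume \<rho>: "0 < \<rho>" "\<rho> \<le> R"
    have "\<bar>remainder (\<rho> *\<^sub>R \<omega>)\<bar> \<le> KF / \<rho>\<^sup>2"
      using remainder_le[OF K(2) K(1), of "\<rho> *\<^sub>R \<omega>"] \<omega> \<rho> by (simp add: KF_def)
    from mult_right_mono[OF this, of "\<rho> ^ (DIM('a) - 1)"]
    have "\<bar>remainder (\<rho> *\<^sub>R \<omega>) * \<rho> ^ (DIM('a) - 1)\<bar> \<le> KF / \<rho>\<^sup>2 * \<rho> ^ (DIM('a) - 1)"
      using \<rho> by (simp add: abs_mult)
    also have "\<dots> = KF * \<rho> ^ (DIM('a) - 3)"
      using \<rho> dim by (simp add: power_diff power2_eq_square numeral_3_eq_3)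
    also have "\<dots> \<le> KF * R ^ (DIM('a) - 3)"
      using \<rho> KF by (intro mult_left_mono power_mono) auto
    finally show "\<bar>remainder (\<rho> *\<^sub>R \<omega>) * \<rho> ^ (DIM('a) - 1)\<bar> \<le> KF * R ^ (DIM('a) - 3)" .
  qed (use KF R in simp)
qed

lemma integral_ray_remainder_nonneg:
  assumes \<omega>: "norm \<omega> = 1"
  defines "I \<equiv> \<lambda>\<rho>. indicator {0<..} \<rho> * (remainder (\<rho> *\<^sub>R \<omega>) * \<rho> ^ (DIM('a) - 1))"
  shows "integrable lborel I" "0 \<le> integral\<^sup>L lborel I"
proof -
  obtain R where R: "R > 0" "\<And>x. R \<le> norm x \<Longrightarrow> radial_deriv u x = 0 \<and> radial_deriv2 u x = 0"
    using support_radius by blast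
  obtain K1 where K1: "K1 \<ge> 0"
    "\<And>\<rho>. 0 < \<rho> \<Longrightarrow> \<rho> \<le> R \<Longrightarrow> \<bar>remainder (\<rho> *\<^sub>R \<omega>) * \<rho> ^ (DIM('a) - 1)\<bar> \<le> K1"
    using ray_remainder_bound[OF \<omega> R(1)] by blast
  obtain K2 where K2: "K2 \<ge> 0" "\<And>\<epsilon>. 0 < \<epsilon> \<Longrightarrow> \<epsilon> \<le> 1 \<Longrightarrow> \<epsilon> \<le> R \<Longrightarrow> ray_flux \<omega> \<epsilon> \<le> K2 * \<epsilon>"
    using ray_flux_small[OF \<omega> R(1)] by blast
  have norm_ray: "norm (\<rho> *\<^sub>R \<omega>) = \<rho>" if "0 \<le> \<rho>" for \<rho>
    using \<omega> that by simp
  have "(\<lambda>\<rho>. remainder (\<rho> *\<^sub>R \<omega>) * \<rho> ^ (DIM('a) - 1)) \<in> borel_measurable borel"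
    by measurable
  moreover have "remainder (\<rho> *\<^sub>R \<omega>) * \<rho> ^ (DIM('a) - 1) = 0" if "R \<le> \<rho>" for \<rho>
  proof -
    have "remainder (\<rho> *\<^sub>R \<omega>) = 0"
      using that R norm_ray[of \<rho>] densities_vanish[of "\<rho> *\<^sub>R \<omega>"] by (simp add: remainder_def)
    then show ?thesis by simp
  qed
  moreover have "\<bar>remainder (\<rho> *\<^sub>R \<omega>) * \<rho> ^ (DIM('a) - 1)\<bar> \<le> K1 + K2" if "0 < \<rho>" "\<rho> \<le> R" for \<rho>
    using K1(2)[OF that] K2(1) by linarith
  moreover have "ray_flux \<omega> \<epsilon> \<le> (K1 + K2) * \<epsilon>" if "0 < \<epsilon>" "\<epsilon> \<le> 1" "\<epsilon> \<le> R" for \<epsilon>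
    using K2(2)[OF that] mult_nonneg_nonneg[OF K1(1), of \<epsilon>] that by (simp add: distrib_right)
  moreover have "ray_flux \<omega> R = 0"
    using R norm_ray[of R] by (intro ray_flux_vanish[OF \<omega> R(1)]) auto
  moreover have "0 \<le> K1 + K2"
    using K1(1) K2(1) by simp
  ultimately show "integrable lborel I" "0 \<le> integral\<^sup>L lborel I"
    unfolding I_def
    using integral_Ioi_nonneg_by_antiderivative[where B="ray_flux \<omega>" and B'="deriv (ray_flux \<omega>)",
        OF _ R(1) _ _ _ _ _ ray_flux_deriv_le_remainder[OF \<omega>]]
    by blast+
qed

lemma ray_integral_remainder:
  assumes "norm \<omega> = 1"
  shows "ray_integral (\<lambda>x. ennreal (- remainder x)) \<omega> \<le> ray_integral (\<lambda>x. ennreal (remainder x)) \<omega>"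
  using integral_nonneg_iff_nn_integral_le[OF integral_ray_remainder_nonneg(1)[OF assms]]
    integral_ray_remainder_nonneg(2)[OF assms]
  unfolding ray_integral_ennreal by simp

lemma integral_remainder_nonneg: "0 \<le> integral\<^sup>L lborel remainder"
proof -
  have "integrable lborel remainder"
    unfolding remainder_def[abs_def] using integrable_densities by simp
  then show ?thesis
    by (rule integral_nonneg_iff_nn_integral_le[THEN iffD2], intro nn_integral_mono_polar)
      (simp_all add: ray_integral_remainder)
qed

end

theorem theorem2p5:
  fixes psi :: "real \<Rightarrow> real" and D :: "nat \<Rightarrow> real \<Rightarrow> real"
    and u :: "'a::euclidean_space \<Rightarrow> real"
  assumes dim: "DIM('a) \<ge> 3"
    and D0: "\<forall>x\<ge>0. D 0 x = psi x"
    and Dsucc: "\<forall>k. \<forall>x\<ge>0. (D k has_real_derivative D (Suc k) x) (at x within {0..})"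
    and nonneg: "\<forall>x\<ge>0. psi x \<ge> 0"
    and pos: "\<forall>x>0. psi x > 0"
    and d1: "D 1 0 = 1"
    and even: "\<forall>k. D (2 * k) 0 = 0"
    and u_smooth: "smooth_fun u"
    and u_supp: "compact_support u"
  shows "(\<integral>x. (radial_laplacian DIM('a) D u x)\<^sup>2 * vol_density DIM('a) psi x \<partial>lborel)
       - (real DIM('a) - 1) / 4 *
         (\<integral>x. (Lambda_rad DIM('a) D (norm x) + 4 * (K_rad D (norm x) - H_tan D (norm x)))
               * (radial_deriv u x)\<^sup>2 * vol_density DIM('a) psi x \<partial>lborel)
     \<ge> 1 / 4 * (\<integral>x. (1 / (norm x)\<^sup>2) * (radial_deriv u x)\<^sup>2 * vol_density DIM('a) psi x \<partial>lborel)
       + ((real DIM('a))\<^sup>2 - 1) / 4 *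
         (\<integral>x. (1 / (psi (norm x))\<^sup>2) * (radial_deriv u x)\<^sup>2 * vol_density DIM('a) psi x \<partial>lborel)"
proof -
  interpret radial_model D psi u
  proof
    show "D 0 r > 0" if "r > 0" for r
      using D0 pos that by auto
    show "D 0 0 = 0" "D 2 0 = 0"
      using even[rule_format, of 0] even[rule_format, of 1] by simp_all
  qed (use dim D0 Dsucc d1 u_smooth u_supp in auto)
  show ?thesis
    using integral_remainder_nonneg
    unfolding integral_remainder laplacian_density_def[abs_def] curvature_density_def[abs_def]
      hardy_density_def[abs_def] psi_density_def[abs_def]
    by linarith
qed

end
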